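(* Consider a $d$-regular simple graph ($d\ge3$) on $B$ bonds, quantised with unitary vertex scattering matrices without back-scattering (all diagonal entries zero). Let $T$ be a positive integer, $\kappa>0$, and $f\in\mathbb{C}^{2B}$ with $|f_b|\le\kappa$ for each $b$ and $\mathrm{Tr}\,\mathrm{Op}(f)=\sum_bf_b=0$. Then there is a constant $c$ depending only on $d$ such that $$V(f,B)\le\frac1{2BT}\sum_{b}|f_b|^2+\frac1B\sum_{t=1}^T\hat w_T(t)\Big(\langle f,M^tf\rangle_{\mathbb{C}^{2B}}+c\,\kappa^2(d-1)^t|\mathcal{C}_{B,2T}|\Big).$$
   Context: Directed bonds, $o(b)$, $t(b)$, vertex matrices $\sigma_v$, the bond scattering matrix $S$ ($S_{bc}=0$ unless $t(b)=o(c)$, otherwise the entry of $\sigma_{t(b)}$ in the row of the bond of $c$ and column of the bond of $b$) and $U(k)_{bc}=e^{ikL_b}S_{bc}$ are as usual for quantum graphs with bond lengths $L_b>0$. $M_{bc}=|S_{bc}|^2$. $\mathrm{Op}(f)=\mathrm{diag}(f)$, $\langle x,y\rangle=\sum\bar x_iy_i$. With $\{\phi_j(k)\}$ an orthonormal eigenbasis of $U(k)$, $V(f,B)=\frac1{2B}\lim_{K\to\infty}\frac1K\int_0^K\sum_{j=1}^{2B}|\langle\phi_j(k),\mathrm{Op}(f)\phi_j(k)\rangle-\frac1{2B}\mathrm{Tr}\,\mathrm{Op}(f)|^2dk$. $\hat w_T(t)=\frac1T(1-\frac{|t|}T)$ for $|t|<T$ and $0$ otherwise. A cycle is a closed path without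 back-tracking; $\mathcal{C}_{B,t}$ is the set of bonds on a cycle of length at most $t$. *)

theory Defs
  imports "HOL-Analysis.Analysis"
begin

text \<open>Directed bonds are pairs (u,v) with E u v, o(b) = fst b,
t(b) = snd b.\<close>

definition simple_graph :: "nat set \<Rightarrow> (nat \<Rightarrow> nat \<Rightarrow> bool) \<Rightarrow> bool" where
  "simple_graph Vs E \<longleftrightarrow> finite Vs \<and> (\<forall>u v. E u v \<longrightarrow> u \<in> Vs \<and> v \<in> Vs)
     \<and> (\<forall>u v. E u v \<longrightarrow> E v u) \<and> (\<forall>u. \<not> E u u)"

definition regular_graph :: "nat set \<Rightarrow> (nat \<Rightarrow> nat \<Rightarrow> bool) \<Rightarrow> nat \<Rightarrow> bool" where
  "regular_graph Vs E d \<longleftrightarrow> simple_graph Vs E \<and> (\<forall>v\<in>Vs. card {w. E v w} = d)"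

definition dbonds :: "(nat \<Rightarrow> nat \<Rightarrow> bool) \<Rightarrow> (nat \<times> nat) set" where
  "dbonds E = {(u, v). E u v}"

definition ubond :: "nat \<times> nat \<Rightarrow> nat set" where
  "ubond b = {fst b, snd b}"

definition ubonds :: "(nat \<Rightarrow> nat \<Rightarrow> bool) \<Rightarrow> nat set set" where
  "ubonds E = ubond ` dbonds E"

definition nbonds :: "(nat \<Rightarrow> nat \<Rightarrow> bool) \<Rightarrow> nat" where
  "nbonds E = card (ubonds E)"

text \<open>Vertex scattering matrices: \<open>\<sigma> v w u\<close> is the entry of \<open>\<sigma>\<^sub>v\<close> in the row of the
bond {v,w} and the column of the bond {v,u} (u, w neighbours of v).\<close>
definition unitary_on :: "nat set \<Rightarrow> (nat \<Rightarrow> nat \<Rightarrow> complex) \<Rightarrow> bool" where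
  "unitary_on N A \<longleftrightarrow>
     (\<forall>u\<in>N. \<forall>u'\<in>N. (\<Sum>w\<in>N. cnj (A w u) * A w u') = (if u = u' then 1 else 0)) \<and>
     (\<forall>w\<in>N. \<forall>w'\<in>N. (\<Sum>u\<in>N. A w u * cnj (A w' u)) = (if w = w' then 1 else 0))"

definition vertex_matrices_ok ::
  "nat set \<Rightarrow> (nat \<Rightarrow> nat \<Rightarrow> bool) \<Rightarrow> (nat \<Rightarrow> nat \<Rightarrow> nat \<Rightarrow> complex) \<Rightarrow> bool" where
  "vertex_matrices_ok Vs E \<sigma> \<longleftrightarrow> (\<forall>v\<in>Vs. unitary_on {w. E v w} (\<sigma> v))"

definition no_backscattering ::
  "nat set \<Rightarrow> (nat \<Rightarrow> nat \<Rightarrow> bool) \<Rightarrow> (nat \<Rightarrow> nat \<Rightarrow> nat \<Rightarrow> complex) \<Rightarrow> bool" where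
  "no_backscattering Vs E \<sigma> \<longleftrightarrow> (\<forall>v\<in>Vs. \<forall>u. E v u \<longrightarrow> \<sigma> v u u = 0)"

definition Smat :: "(nat \<Rightarrow> nat \<Rightarrow> nat \<Rightarrow> complex) \<Rightarrow> nat \<times> nat \<Rightarrow> nat \<times> nat \<Rightarrow> complex" where
  "Smat \<sigma> b c = (if snd b = fst c then \<sigma> (snd b) (snd c) (fst b) else 0)"

text \<open>Lengths are attached to undirected bonds, so \<open>L\<^sub>b\<close> = \<open>Lu (ubond b)\<close>.\<close>
definition Umat :: "(nat \<Rightarrow> nat \<Rightarrow> nat \<Rightarrow> complex) \<Rightarrow> (nat set \<Rightarrow> real) \<Rightarrow> real
     \<Rightarrow> nat \<times> nat \<Rightarrow> nat \<times> nat \<Rightarrow> complex" where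
  "Umat \<sigma> Lu k b c = exp (\<i> * complex_of_real (k * Lu (ubond b))) * Smat \<sigma> b c"

definition Mmat :: "(nat \<Rightarrow> nat \<Rightarrow> nat \<Rightarrow> complex) \<Rightarrow> nat \<times> nat \<Rightarrow> nat \<times> nat \<Rightarrow> real" where
  "Mmat \<sigma> b c = (cmod (Smat \<sigma> b c))\<^sup>2"

fun mpow :: "'i set \<Rightarrow> ('i \<Rightarrow> 'i \<Rightarrow> real) \<Rightarrow> nat \<Rightarrow> 'i \<Rightarrow> 'i \<Rightarrow> real" where
  "mpow I A 0 = (\<lambda>b c. if b = c then 1 else 0)"
| "mpow I A (Suc t) = (\<lambda>b c. \<Sum>e\<in>I. A b e * mpow I A t e c)"

definition cinner :: "'i set \<Rightarrow> ('i \<Rightarrow> complex) \<Rightarrow> ('i \<Rightarrow> complex) \<Rightarrow> complex" where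
  "cinner I x y = (\<Sum>i\<in>I. cnj (x i) * y i)"

definition Op :: "('i \<Rightarrow> complex) \<Rightarrow> ('i \<Rightarrow> complex) \<Rightarrow> 'i \<Rightarrow> complex" where
  "Op f x = (\<lambda>i. f i * x i)"

definition Tr_Op :: "'i set \<Rightarrow> ('i \<Rightarrow> complex) \<Rightarrow> complex" where
  "Tr_Op I f = (\<Sum>i\<in>I. f i)"

definition orthonormal_eigenbasis ::
  "'i set \<Rightarrow> nat \<Rightarrow> ('i \<Rightarrow> 'i \<Rightarrow> complex) \<Rightarrow> (nat \<Rightarrow> 'i \<Rightarrow> complex) \<Rightarrow> bool" where
  "orthonormal_eigenbasis I n A \<phi> \<longleftrightarrow>
     (\<forall>j<n. \<forall>j'<n. cinner I (\<phi> j) (\<phi> j') = (if j = j' then 1 else 0)) \<and>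
     (\<forall>j<n. \<exists>ev. \<forall>b\<in>I. (\<Sum>c\<in>I. A b c * \<phi> j c) = ev * \<phi> j b)"

definition var_integrand ::
  "'i set \<Rightarrow> nat \<Rightarrow> ('i \<Rightarrow> complex) \<Rightarrow> (real \<Rightarrow> nat \<Rightarrow> 'i \<Rightarrow> complex) \<Rightarrow> real \<Rightarrow> real" where
  "var_integrand I n f \<phi> k =
     (\<Sum>j<n. (cmod (cinner I (\<phi> k j) (Op f (\<phi> k j)) - Tr_Op I f / of_nat n))\<^sup>2)"

definition w_hat :: "nat \<Rightarrow> int \<Rightarrow> real" where
  "w_hat T t = (if \<bar>t\<bar> < int T then (1 / real T) * (1 - real_of_int \<bar>t\<bar> / real T) else 0)"

definition is_cycle :: "(nat \<Rightarrow> nat \<Rightarrow> bool) \<Rightarrow> (nat \<times> nat) list \<Rightarrow> bool" where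
  "is_cycle E ps \<longleftrightarrow> ps \<noteq> [] \<and> set ps \<subseteq> dbonds E \<and>
     (\<forall>i < length ps. snd (ps ! i) = fst (ps ! ((i + 1) mod length ps)) \<and>
        ps ! ((i + 1) mod length ps) \<noteq> (snd (ps ! i), fst (ps ! i)))"

definition cycle_bonds :: "(nat \<Rightarrow> nat \<Rightarrow> bool) \<Rightarrow> nat \<Rightarrow> nat set set" where
  "cycle_bonds E t = {e. \<exists>ps. is_cycle E ps \<and> length ps \<le> t \<and> e \<in> ubond ` set ps}"

definition rationally_independent :: "nat set set \<Rightarrow> (nat set \<Rightarrow> real) \<Rightarrow> bool" where
  "rationally_independent Es Lu \<longleftrightarrow>
     (\<forall>q :: nat set \<Rightarrow> int. (\<Sum>e\<in>Es. real_of_int (q e) * Lu e) = 0 \<longrightarrow> (\<forall>e\<in>Es. q e = 0))"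

end

theory Submission
  imports Defs
begin

text \<open>
For every \<open>k\<close>, an eigenvector \<open>\<phi>\<close> of the unitary \<open>U = U(k)\<close> is also an eigenvector of
\<open>G = \<Sum>s<T. U^(-s) Op(f) U^s\<close>, with \<open>\<langle>\<phi>, G \<phi>\<rangle> = T \<langle>\<phi>, Op(f) \<phi>\<rangle>\<close>. By Bessel's inequality the
squared diagonal of \<open>Op(f)\<close> in the eigenbasis is therefore at most \<open>T^(-2)\<close> times the
Hilbert-Schmidt norm of \<open>G\<close>, a sum over the lags \<open>|s - s'|\<close> of quadratic forms in the transition
probabilities \<open>|U^t(a,a')|^2\<close>. Expanding \<open>U^t(a,a')\<close> over walks, the long-time average over \<open>k\<close>
keeps only pairs of walks of equal length. Equal pairs give \<open>M^t\<close>. Two different walks of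
non-zero amplitude are non-backtracking, so when they leave each other and meet again they close
a cycle of length at most \<open>2T\<close> through the bond where they first diverge; after that bond the
partner walk has at most \<open>(d-1)^(t+1-i)\<close> continuations, and since \<open>M\<close> is doubly stochastic the
walks through a fixed bond have total weight one. This gives the cycle term, and summing over
the lags produces the window \<open>w_T\<close>.
\<close>

lemma sum_product_sum_swap:
  "(\<Sum>c\<in>C. (\<Sum>e\<in>A. F e c) * (\<Sum>e'\<in>B. G e' c))
   = (\<Sum>e\<in>A. \<Sum>e'\<in>B. \<Sum>c\<in>C. F e c * G e' c :: 'a::comm_semiring_1)"
proof -
  have "(\<Sum>c\<in>C. (\<Sum>e\<in>A. F e c) * (\<Sum>e'\<in>B. G e' c)) = (\<Sum>e\<in>A. \<Sum>c\<in>C. \<Sum>e'\<in>B. F e c * G e' c)"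
    by (simp add: sum_product) (rule sum.swap)
  also have "\<dots> = (\<Sum>e\<in>A. \<Sum>e'\<in>B. \<Sum>c\<in>C. F e c * G e' c)"
    by (rule sum.cong[OF refl], rule sum.swap)
  finally show ?thesis .
qed

lemma sum_outer_to_inner:
  "(\<Sum>c\<in>C. \<Sum>s\<in>S. \<Sum>a\<in>A. g c s a) = (\<Sum>s\<in>S. \<Sum>a\<in>A. \<Sum>c\<in>C. g c s a)"
  by (subst sum.swap) (intro sum.cong refl, rule sum.swap)

lemma sum_swap_pairs:
  "(\<Sum>a\<in>A. \<Sum>b\<in>B. \<Sum>c\<in>C. \<Sum>d\<in>D. h a b c d) = (\<Sum>c\<in>C. \<Sum>d\<in>D. \<Sum>a\<in>A. \<Sum>b\<in>B. h a b c d)"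
  by (simp only: sum_outer_to_inner[where C = B and S = C and A = D])
    (rule sum_outer_to_inner[where C = A and S = C and A = D])

lemma if_one_zero_mult [simp]: "(if P then 1 else 0) * y = (if P then y else (0::'a::comm_semiring_1))"
  by simp

lemma mult_if_one_zero [simp]: "y * (if P then 1 else 0) = (if P then y else (0::'a::comm_semiring_1))"
  by simp

lemma cnj_mult_self: "cnj z * z = complex_of_real ((cmod z)\<^sup>2)"
  by (subst mult.commute) (rule complex_norm_square[symmetric])

lemma cmod_sq_eq_Re: "(cmod z)\<^sup>2 = Re (z * cnj z)"
  by (simp add: complex_norm_square[symmetric] del: of_real_power)

lemma cmod_sum_sq: "(cmod (\<Sum>x\<in>A. z x))\<^sup>2 = (\<Sum>x\<in>A. \<Sum>y\<in>A. Re (z x * cnj (z y)))"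
  by (simp add: cmod_sq_eq_Re sum_product)

section \<open>Matrix powers as sums over walks\<close>

text \<open>\<open>mpow\<close> is real-valued; \<open>mat_pow\<close> is the same recursion over any commutative
semiring, so that it also applies to the complex matrices \<open>U(k)\<close>.\<close>

fun mat_pow :: "'i set \<Rightarrow> ('i \<Rightarrow> 'i \<Rightarrow> 'a::comm_semiring_1) \<Rightarrow> nat \<Rightarrow> 'i \<Rightarrow> 'i \<Rightarrow> 'a" where
  "mat_pow I A 0 = (\<lambda>b c. if b = c then 1 else 0)"
| "mat_pow I A (Suc t) = (\<lambda>b c. \<Sum>e\<in>I. A b e * mat_pow I A t e c)"

lemma mpow_eq_mat_pow: "mpow I A t = mat_pow I A t"
  by (induction t) auto

lemma mat_pow_add:
  assumes "finite I" and "b \<in> I"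
  shows "mat_pow I A (t + s) b c = (\<Sum>x\<in>I. mat_pow I A t b x * mat_pow I A s x c)"
  using assms(2)
proof (induction t arbitrary: b)
  case 0
  then show ?case using assms(1) by simp
next
  case (Suc t)
  have "mat_pow I A (Suc t + s) b c = (\<Sum>e\<in>I. \<Sum>x\<in>I. A b e * (mat_pow I A t e x * mat_pow I A s x c))"
    using Suc.IH by (simp add: sum_distrib_left)
  also have "\<dots> = (\<Sum>x\<in>I. mat_pow I A (Suc t) b x * mat_pow I A s x c)"
    by (subst sum.swap) (simp add: sum_distrib_right mult.assoc)
  finally show ?case .
qed

lemma sum_mat_pow_row:
  assumes "finite I" and "\<And>b. b \<in> I \<Longrightarrow> (\<Sum>c\<in>I. M b c) = 1" and "b \<in> I"
  shows "(\<Sum>c\<in>I. mat_pow I M j b c) = 1"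
  using assms(3)
proof (induction j arbitrary: b)
  case 0
  then show ?case using assms(1) by simp
next
  case (Suc j)
  have "(\<Sum>c\<in>I. mat_pow I M (Suc j) b c) = (\<Sum>e\<in>I. M b e * (\<Sum>c\<in>I. mat_pow I M j e c))"
    by (simp add: sum_distrib_left) (rule sum.swap)
  then show ?case
    using Suc assms(2) by simp
qed

lemma sum_mat_pow_col:
  assumes "finite I" and "\<And>c. c \<in> I \<Longrightarrow> (\<Sum>b\<in>I. M b c) = 1" and "c \<in> I"
  shows "(\<Sum>b\<in>I. mat_pow I M j b c) = 1"
  using assms(3)
proof (induction j arbitrary: c)
  case 0
  then show ?case using assms(1) by (simp add: sum.delta)
next
  case (Suc j)
  have "(\<Sum>b\<in>I. mat_pow I M (Suc j) b c) = (\<Sum>e\<in>I. (\<Sum>b\<in>I. M b e) * mat_pow I M j e c)"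
    by (simp add: sum_distrib_right) (rule sum.swap)
  then show ?case
    using Suc assms(2) by simp
qed

definition walks :: "'i set \<Rightarrow> nat \<Rightarrow> 'i \<Rightarrow> 'i \<Rightarrow> 'i list set" where
  "walks I t p q = {xs. set xs \<subseteq> I \<and> length xs = Suc t \<and> xs ! 0 = p \<and> xs ! t = q}"

definition walk_weight :: "('i \<Rightarrow> 'i \<Rightarrow> 'a::comm_semiring_1) \<Rightarrow> 'i list \<Rightarrow> 'a" where
  "walk_weight A xs = (\<Prod>i<length xs - 1. A (xs ! i) (xs ! Suc i))"

lemma finite_walks: "finite I \<Longrightarrow> finite (walks I t p q)"
  by (rule finite_subset[OF _ finite_lists_length_eq[of I "Suc t"]]) (auto simp: walks_def)

lemma walk_weight_Cons:
  "length ys = Suc n \<Longrightarrow> walk_weight A (p # ys) = A p (ys ! 0) * walk_weight A ys"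
  unfolding walk_weight_def by (simp add: prod.lessThan_Suc_shift del: prod.lessThan_Suc)

lemma walks_0: "p \<in> I \<Longrightarrow> walks I 0 p q = (if p = q then {[p]} else {})"
  by (auto simp: walks_def length_Suc_conv)

lemma walks_Suc: "p \<in> I \<Longrightarrow> walks I (Suc t) p q = (\<Union>e\<in>I. Cons p ` walks I t e q)"
proof (intro equalityI subsetI)
  fix xs assume "p \<in> I" and xs: "xs \<in> walks I (Suc t) p q"
  then obtain ys where "xs = p # ys" "ys \<in> walks I t (ys ! 0) q" "ys ! 0 \<in> I"
    by (auto simp: walks_def length_Suc_conv)
  then show "xs \<in> (\<Union>e\<in>I. Cons p ` walks I t e q)" by blast
qed (auto simp: walks_def)

lemma sum_walks_Suc:
  assumes "finite I" and "p \<in> I"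
  shows "(\<Sum>xs\<in>walks I (Suc t) p q. g xs) = (\<Sum>e\<in>I. \<Sum>ys\<in>walks I t e q. g (p # ys))"
proof -
  have "(\<Sum>xs\<in>walks I (Suc t) p q. g xs) = (\<Sum>e\<in>I. \<Sum>xs\<in>Cons p ` walks I t e q. g xs)"
    unfolding walks_Suc[OF assms(2)]
    by (rule sum.UNION_disjoint) (simp_all add: assms(1) finite_walks, auto simp: walks_def)
  also have "\<dots> = (\<Sum>e\<in>I. \<Sum>ys\<in>walks I t e q. g (p # ys))"
    by (simp add: sum.reindex)
  finally show ?thesis .
qed

lemma mat_pow_eq_sum_walks:
  assumes "finite I" and "p \<in> I"
  shows "mat_pow I A t p q = (\<Sum>xs\<in>walks I t p q. walk_weight A xs)"
  using assms(2)
proof (induction t arbitrary: p)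
  case 0
  then show ?case by (simp add: walks_0 walk_weight_def)
next
  case (Suc t)
  have "(\<Sum>xs\<in>walks I (Suc t) p q. walk_weight A xs)
      = (\<Sum>e\<in>I. \<Sum>ys\<in>walks I t e q. walk_weight A (p # ys))"
    by (rule sum_walks_Suc[OF assms(1) Suc.prems])
  also have "\<dots> = (\<Sum>e\<in>I. A p e * (\<Sum>ys\<in>walks I t e q. walk_weight A ys))"
    by (auto simp: sum_distrib_left walks_def walk_weight_Cons intro!: sum.cong)
  finally show ?case
    using Suc.IH by simp
qed

lemma sum_walks_through:
  assumes "finite I" and "p \<in> I" and "i \<le> t"
  shows "(\<Sum>xs\<in>walks I t p q. if xs ! i = e then walk_weight A xs else 0)
       = mat_pow I A i p e * mat_pow I A (t - i) e q"
  using assms(2,3)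
proof (induction i arbitrary: p t)
  case 0
  have "(\<Sum>xs\<in>walks I t p q. if xs ! 0 = e then walk_weight A xs else 0)
      = (if p = e then (\<Sum>xs\<in>walks I t p q. walk_weight A xs) else 0)"
    by (auto simp: walks_def intro!: sum.cong)
  then show ?case
    using mat_pow_eq_sum_walks[OF assms(1) 0(1), of A t q] by auto
next
  case (Suc i)
  then obtain t' where t: "t = Suc t'" by (cases t) auto
  have "(\<Sum>xs\<in>walks I t p q. if xs ! Suc i = e then walk_weight A xs else 0)
      = (\<Sum>e'\<in>I. \<Sum>ys\<in>walks I t' e' q. if (p # ys) ! Suc i = e then walk_weight A (p # ys) else 0)"
    unfolding t by (rule sum_walks_Suc[OF assms(1) Suc.prems(1)])
  also have "\<dots> = (\<Sum>e'\<in>I. A p e' * (\<Sum>ys\<in>walks I t' e' q. if ys ! i = e then walk_weight A ys else 0))"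
    by (auto simp: sum_distrib_left walks_def walk_weight_Cons intro!: sum.cong)
  also have "\<dots> = (\<Sum>e'\<in>I. A p e' * (mat_pow I A i e' e * mat_pow I A (t' - i) e q))"
    using Suc.IH Suc.prems t by (intro sum.cong) auto
  finally show ?case
    using t by (simp add: sum_distrib_right mult.assoc)
qed

lemma sum_walks_through_set:
  assumes "finite I" and rows: "\<And>b. b \<in> I \<Longrightarrow> (\<Sum>c\<in>I. M b c) = 1"
    and cols: "\<And>c. c \<in> I \<Longrightarrow> (\<Sum>b\<in>I. M b c) = 1" and "C \<subseteq> I" and "i \<le> t"
  shows "(\<Sum>p\<in>I. \<Sum>q\<in>I. \<Sum>x\<in>walks I t p q. if x ! i \<in> C then walk_weight M x else 0) = of_nat (card C)"
proof -
  have "finite C" using assms(1,4) finite_subset by blast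
  then have "(\<Sum>p\<in>I. \<Sum>q\<in>I. \<Sum>x\<in>walks I t p q. if x ! i \<in> C then walk_weight M x else 0)
      = (\<Sum>p\<in>I. \<Sum>q\<in>I. \<Sum>x\<in>walks I t p q. \<Sum>e\<in>C. if x ! i = e then walk_weight M x else 0)"
    by (intro sum.cong refl) simp
  also have "\<dots> = (\<Sum>p\<in>I. \<Sum>q\<in>I. \<Sum>e\<in>C. mat_pow I M i p e * mat_pow I M (t - i) e q)"
    using assms(1,5) by (intro sum.cong refl) (simp add: sum.swap[where B = C] sum_walks_through)
  also have "\<dots> = (\<Sum>e\<in>C. \<Sum>p\<in>I. \<Sum>q\<in>I. mat_pow I M i p e * mat_pow I M (t - i) e q)"
    by (rule sum_outer_to_inner[symmetric])
  also have "\<dots> = (\<Sum>e\<in>C. (\<Sum>p\<in>I. mat_pow I M i p e) * (\<Sum>q\<in>I. mat_pow I M (t - i) e q))"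
    by (simp only: sum_product)
  also have "\<dots> = of_nat (card C)"
    using assms(4) by (simp add: sum_mat_pow_row[OF assms(1) rows] sum_mat_pow_col[OF assms(1) cols] subsetD)
  finally show ?thesis .
qed

lemma walk_weight_norm_sq: "walk_weight (\<lambda>b c. (cmod (S b c))\<^sup>2) xs = (cmod (walk_weight S xs))\<^sup>2"
  by (simp add: walk_weight_def prod_norm[symmetric] prod_power_distrib[symmetric])

lemma successively_walk_weight_nonzero:
  assumes "walk_weight S xs \<noteq> 0" and "set xs \<subseteq> I"
  shows "successively (\<lambda>a b. a \<in> I \<and> b \<in> I \<and> S a b \<noteq> 0) xs"
  unfolding successively_conv_nth
proof (intro allI impI)
  fix i assume "Suc i < length xs"
  have "S (xs ! i) (xs ! Suc i) \<noteq> 0"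
  proof
    assume "S (xs ! i) (xs ! Suc i) = 0"
    then have "walk_weight S xs = 0"
      unfolding walk_weight_def using \<open>Suc i < length xs\<close> by (intro prod_zero) auto
    with assms(1) show False ..
  qed
  then show "xs ! i \<in> I \<and> xs ! Suc i \<in> I \<and> S (xs ! i) (xs ! Suc i) \<noteq> 0"
    using \<open>Suc i < length xs\<close> assms(2) by auto
qed

section \<open>Unitary matrices and Bessel's inequality\<close>

definition orthonormal_rows :: "'i set \<Rightarrow> ('i \<Rightarrow> 'i \<Rightarrow> complex) \<Rightarrow> bool" where
  "orthonormal_rows I U \<longleftrightarrow>
     (\<forall>b\<in>I. \<forall>b'\<in>I. (\<Sum>c\<in>I. U b c * cnj (U b' c)) = (if b = b' then 1 else 0))"

definition orthonormal_cols :: "'i set \<Rightarrow> ('i \<Rightarrow> 'i \<Rightarrow> complex) \<Rightarrow> bool" where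
  "orthonormal_cols I U \<longleftrightarrow>
     (\<forall>c\<in>I. \<forall>c'\<in>I. (\<Sum>b\<in>I. cnj (U b c) * U b c') = (if c = c' then 1 else 0))"

lemma orthonormal_rows_sum_norm_sq:
  assumes "orthonormal_rows I S" and "b \<in> I"
  shows "(\<Sum>c\<in>I. (cmod (S b c))\<^sup>2) = 1"
proof -
  have "(\<Sum>c\<in>I. S b c * cnj (S b c)) = 1"
    using assms by (simp add: orthonormal_rows_def)
  then have "complex_of_real (\<Sum>c\<in>I. (cmod (S b c))\<^sup>2) = 1"
    by (simp add: complex_norm_square del: of_real_power)
  then show ?thesis
    by (metis of_real_eq_1_iff)
qed

lemma orthonormal_cols_sum_norm_sq:
  assumes "orthonormal_cols I S" and "c \<in> I"
  shows "(\<Sum>b\<in>I. (cmod (S b c))\<^sup>2) = 1"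
proof -
  have "(\<Sum>b\<in>I. cnj (S b c) * S b c) = 1"
    using assms by (simp add: orthonormal_cols_def)
  then have "complex_of_real (\<Sum>b\<in>I. (cmod (S b c))\<^sup>2) = 1"
    by (simp add: cnj_mult_self del: of_real_power)
  then show ?thesis
    by (metis of_real_eq_1_iff)
qed

lemma orthonormal_rows_mat_pow:
  assumes "finite I" and "orthonormal_rows I U"
  shows "orthonormal_rows I (mat_pow I U s)"
  unfolding orthonormal_rows_def
proof (induction s)
  case 0
  show ?case using assms(1) by simp
next
  case (Suc s)
  show ?case
  proof (intro ballI)
    fix b b' assume "b \<in> I" "b' \<in> I"
    have "(\<Sum>c\<in>I. mat_pow I U (Suc s) b c * cnj (mat_pow I U (Suc s) b' c))
        = (\<Sum>c\<in>I. (\<Sum>e\<in>I. U b e * mat_pow I U s e c) * (\<Sum>e'\<in>I. cnj (U b' e') * cnj (mat_pow I U s e' c)))"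
      by (simp add: cnj_sum)
    also have "\<dots> = (\<Sum>e\<in>I. \<Sum>e'\<in>I. \<Sum>c\<in>I. U b e * mat_pow I U s e c * (cnj (U b' e') * cnj (mat_pow I U s e' c)))"
      by (rule sum_product_sum_swap)
    also have "\<dots> = (\<Sum>e\<in>I. \<Sum>e'\<in>I. U b e * cnj (U b' e') * (\<Sum>c\<in>I. mat_pow I U s e c * cnj (mat_pow I U s e' c)))"
      by (simp add: sum_distrib_left mult_ac)
    also have "\<dots> = (\<Sum>e\<in>I. U b e * cnj (U b' e))"
      using Suc.IH assms(1) by (intro sum.cong) auto
    finally show "(\<Sum>c\<in>I. mat_pow I U (Suc s) b c * cnj (mat_pow I U (Suc s) b' c)) = (if b = b' then 1 else 0)"
      using assms(2) \<open>b \<in> I\<close> \<open>b' \<in> I\<close> by (simp add: orthonormal_rows_def)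
  qed
qed

lemma mat_pow_mult_adjoint:
  assumes "finite I" and "orthonormal_rows I U" and "a \<in> I" and "a' \<in> I"
  shows "(\<Sum>c\<in>I. mat_pow I U s a c * cnj (mat_pow I U s' a' c))
       = (if s' \<le> s then mat_pow I U (s - s') a a' else cnj (mat_pow I U (s' - s) a' a))"
proof -
  have le: "(\<Sum>c\<in>I. mat_pow I U s a c * cnj (mat_pow I U s' a' c)) = mat_pow I U (s - s') a a'"
    if "s' \<le> s" "a \<in> I" "a' \<in> I" for s s' a a'
  proof -
    have "(\<Sum>c\<in>I. mat_pow I U s a c * cnj (mat_pow I U s' a' c))
        = (\<Sum>x\<in>I. mat_pow I U (s - s') a x * (\<Sum>c\<in>I. mat_pow I U s' x c * cnj (mat_pow I U s' a' c)))"
      using mat_pow_add[OF assms(1) \<open>a \<in> I\<close>, of U "s - s'" s'] \<open>s' \<le> s\<close>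
      by (simp add: sum_distrib_left sum_distrib_right mult.assoc) (rule sum.swap)
    also have "\<dots> = mat_pow I U (s - s') a a'"
      using orthonormal_rows_mat_pow[OF assms(1,2)] assms(1) \<open>a' \<in> I\<close>
      by (simp add: orthonormal_rows_def cong: sum.cong)
    finally show ?thesis .
  qed
  show ?thesis
  proof (cases "s' \<le> s")
    case False
    have "(\<Sum>c\<in>I. mat_pow I U s a c * cnj (mat_pow I U s' a' c))
        = cnj (\<Sum>c\<in>I. mat_pow I U s' a' c * cnj (mat_pow I U s a c))"
      by (simp add: mult.commute)
    then show ?thesis
      using False le[of s s' a' a] assms(3,4) by simp
  qed (use le assms(3,4) in simp)
qed

lemma cinner_commute: "cinner I y x = cnj (cinner I x y)"
  by (simp add: cinner_def cnj_sum mult.commute)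

lemma cinner_self: "cinner I x x = complex_of_real (\<Sum>i\<in>I. (cmod (x i))\<^sup>2)"
  by (simp add: cinner_def cnj_mult_self)

lemma cinner_sum_left:
  "cinner I (\<lambda>i. \<Sum>j\<in>J. \<alpha> j * \<phi> j i) x = (\<Sum>j\<in>J. cnj (\<alpha> j) * cinner I (\<phi> j) x)"
  by (simp add: cinner_def cnj_sum sum_distrib_left sum_distrib_right mult_ac) (rule sum.swap)

lemma bessel_inequality:
  assumes "finite I" and "finite J"
    and orthonormal: "\<forall>j\<in>J. \<forall>j'\<in>J. cinner I (\<phi> j) (\<phi> j') = (if j = j' then 1 else 0)"
  shows "(\<Sum>j\<in>J. (cmod (cinner I (\<phi> j) v))\<^sup>2) \<le> (\<Sum>i\<in>I. (cmod (v i))\<^sup>2)"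
proof -
  define \<alpha> where "\<alpha> j = cinner I (\<phi> j) v" for j
  define P where "P = (\<lambda>i. \<Sum>j\<in>J. \<alpha> j * \<phi> j i)"
  define N where "N = (\<Sum>j\<in>J. cnj (\<alpha> j) * \<alpha> j)"
  have Pv: "cinner I P v = N"
    by (simp add: P_def N_def \<alpha>_def cinner_sum_left)
  have "cinner I (\<phi> j) P = \<alpha> j" if "j \<in> J" for j
  proof -
    have "cinner I P (\<phi> j) = (\<Sum>j'\<in>J. cnj (\<alpha> j') * (if j' = j then 1 else 0))"
      unfolding P_def cinner_sum_left using orthonormal that by (intro sum.cong) simp_all
    also have "\<dots> = cnj (\<alpha> j)"
      using that assms(2) by simp
    finally show ?thesis
      by (subst cinner_commute) simp
  qed
  then have PP: "cinner I P P = N"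
    by (simp add: P_def N_def cinner_sum_left[of I \<alpha> \<phi>] cong: sum.cong)
  have "0 \<le> Re (cinner I (\<lambda>i. v i - P i) (\<lambda>i. v i - P i))"
    by (simp add: cinner_self sum_nonneg)
  also have "cinner I (\<lambda>i. v i - P i) (\<lambda>i. v i - P i) = cinner I v v - cinner I v P - cinner I P v + cinner I P P"
    by (simp add: cinner_def algebra_simps sum_subtractf sum.distrib)
  also have "\<dots> = cinner I v v - N"
    using Pv PP by (subst cinner_commute[of I v P]) (simp add: N_def cnj_sum mult.commute)
  finally have "0 \<le> Re (cinner I v v - N)" .
  moreover have "Re N = (\<Sum>j\<in>J. (cmod (\<alpha> j))\<^sup>2)"
    by (simp add: N_def cnj_mult_self)
  ultimately show ?thesis
    by (simp add: cinner_self \<alpha>_def)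
qed

lemma cmod_cinner_sq_le:
  assumes "finite I" and "cinner I \<phi> \<phi> = 1"
  shows "(cmod (cinner I \<phi> v))\<^sup>2 \<le> (\<Sum>i\<in>I. (cmod (v i))\<^sup>2)"
  using bessel_inequality[of I "{()}" "\<lambda>_. \<phi>" v] assms by simp

lemma mat_pow_eigenvector:
  assumes "finite I" and eigen: "\<forall>b\<in>I. (\<Sum>c\<in>I. U b c * \<phi> c) = l * \<phi> b" and "a \<in> I"
  shows "(\<Sum>c\<in>I. mat_pow I U s a c * \<phi> c) = l ^ s * \<phi> a"
  using assms(3)
proof (induction s arbitrary: a)
  case 0
  then show ?case using assms(1) by simp
next
  case (Suc s)
  have "(\<Sum>c\<in>I. mat_pow I U (Suc s) a c * \<phi> c) = (\<Sum>e\<in>I. U a e * (\<Sum>c\<in>I. mat_pow I U s e c * \<phi> c))"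
    by (simp add: sum_distrib_left sum_distrib_right mult.assoc) (rule sum.swap)
  also have "\<dots> = l ^ s * (\<Sum>e\<in>I. U a e * \<phi> e)"
    using Suc.IH by (simp add: sum_distrib_left mult_ac)
  finally show ?case
    using eigen Suc.prems by (simp add: mult_ac)
qed

lemma cinner_unitary:
  assumes "finite I" and "orthonormal_cols I U"
  shows "cinner I (\<lambda>b. \<Sum>c\<in>I. U b c * x c) (\<lambda>b. \<Sum>c\<in>I. U b c * x c) = cinner I x x"
proof -
  have "cinner I (\<lambda>b. \<Sum>c\<in>I. U b c * x c) (\<lambda>b. \<Sum>c\<in>I. U b c * x c)
      = (\<Sum>c\<in>I. \<Sum>c'\<in>I. \<Sum>b\<in>I. cnj (U b c) * cnj (x c) * (U b c' * x c'))"
    unfolding cinner_def by (simp add: cnj_sum sum_product_sum_swap)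
  also have "\<dots> = (\<Sum>c\<in>I. \<Sum>c'\<in>I. cnj (x c) * x c' * (\<Sum>b\<in>I. cnj (U b c) * U b c'))"
    by (simp add: sum_distrib_left mult_ac)
  also have "\<dots> = cinner I x x"
    using assms by (simp add: orthonormal_cols_def cinner_def cong: sum.cong)
  finally show ?thesis .
qed

lemma unitary_eigenvalue_norm:
  assumes "finite I" and "orthonormal_cols I U"
    and eigen: "\<forall>b\<in>I. (\<Sum>c\<in>I. U b c * \<phi> c) = l * \<phi> b" and "cinner I \<phi> \<phi> = 1"
  shows "cmod l = 1"
proof -
  have "cinner I \<phi> \<phi> = cinner I (\<lambda>b. l * \<phi> b) (\<lambda>b. l * \<phi> b)"
    using cinner_unitary[OF assms(1,2), of \<phi>] eigen by (simp add: cinner_def)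
  also have "\<dots> = (l * cnj l) * cinner I \<phi> \<phi>"
    by (simp add: cinner_def sum_distrib_left mult_ac)
  also have "\<dots> = complex_of_real ((cmod l)\<^sup>2) * cinner I \<phi> \<phi>"
    by (simp only: complex_norm_square)
  finally have "(cmod l)\<^sup>2 = 1"
    using assms(4) by (metis mult_cancel_right1 of_real_eq_1_iff one_neq_zero)
  then show ?thesis
    using norm_ge_zero[of l] by (auto simp: power2_eq_1_iff)
qed

section \<open>The diagonal of a conjugation-averaged observable\<close>

definition quad_form :: "'i set \<Rightarrow> ('i \<Rightarrow> complex) \<Rightarrow> ('i \<Rightarrow> 'i \<Rightarrow> real) \<Rightarrow> real" where
  "quad_form I f Q = Re (cinner I f (\<lambda>a. \<Sum>a'\<in>I. complex_of_real (Q a a') * f a'))"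

lemma quad_form_eq_sum: "quad_form I f Q = (\<Sum>a\<in>I. \<Sum>a'\<in>I. Re (f a * cnj (f a')) * Q a a')"
  by (simp add: quad_form_def cinner_def sum_distrib_left Re_sum) (simp add: algebra_simps)

lemma quad_form_cong:
  "(\<And>a a'. a \<in> I \<Longrightarrow> a' \<in> I \<Longrightarrow> Q a a' = Q' a a') \<Longrightarrow> quad_form I f Q = quad_form I f Q'"
  unfolding quad_form_eq_sum by (intro sum.cong) auto

lemma quad_form_transpose: "quad_form I f (\<lambda>a a'. Q a' a) = quad_form I f Q"
  unfolding quad_form_eq_sum by (subst sum.swap) (simp add: mult.commute)

lemma hilbert_schmidt_sum_rank_one:
  assumes "finite I"
  shows "(\<Sum>b\<in>I. \<Sum>c\<in>I. (cmod (\<Sum>k\<in>K. cnj (P k b) * w k * P k c))\<^sup>2)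
       = (\<Sum>k\<in>K. \<Sum>k'\<in>K. Re (w k * cnj (w k')) * (cmod (\<Sum>c\<in>I. P k c * cnj (P k' c)))\<^sup>2)"
proof -
  have rank_one: "(\<Sum>b\<in>I. \<Sum>c\<in>I. Re (cnj (P k b) * w k * P k c * cnj (cnj (P k' b) * w k' * P k' c)))
      = Re (w k * cnj (w k')) * (cmod (\<Sum>c\<in>I. P k c * cnj (P k' c)))\<^sup>2" for k k'
  proof -
    define X where "X = (\<Sum>c\<in>I. P k c * cnj (P k' c))"
    have "(\<Sum>b\<in>I. \<Sum>c\<in>I. cnj (P k b) * w k * P k c * cnj (cnj (P k' b) * w k' * P k' c))
        = w k * cnj (w k') * (cnj X * X)"
      by (simp add: X_def sum_product cnj_sum sum_distrib_left mult_ac)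
        (subst sum.swap, simp add: mult_ac)
    then have "(\<Sum>b\<in>I. \<Sum>c\<in>I. Re (cnj (P k b) * w k * P k c * cnj (cnj (P k' b) * w k' * P k' c)))
        = Re (w k * cnj (w k') * (cnj X * X))"
      by (simp only: Re_sum[symmetric])
    then show ?thesis
      unfolding X_def[symmetric] cnj_mult_self by simp
  qed
  have "(\<Sum>b\<in>I. \<Sum>c\<in>I. (cmod (\<Sum>k\<in>K. cnj (P k b) * w k * P k c))\<^sup>2)
      = (\<Sum>k\<in>K. \<Sum>k'\<in>K. \<Sum>b\<in>I. \<Sum>c\<in>I. Re (cnj (P k b) * w k * P k c * cnj (cnj (P k' b) * w k' * P k' c)))"
    unfolding cmod_sum_sq by (rule sum_swap_pairs)
  then show ?thesis
    by (simp only: rank_one)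
qed

lemma sum_sq_diag_le_hilbert_schmidt:
  assumes "finite I" and "finite J"
    and orthonormal: "\<forall>j\<in>J. \<forall>j'\<in>J. cinner I (\<phi> j) (\<phi> j') = (if j = j' then 1 else 0)"
  shows "(\<Sum>j\<in>J. (cmod (cinner I (\<phi> j) (\<lambda>b. \<Sum>c\<in>I. G b c * \<phi> j c)))\<^sup>2)
       \<le> (\<Sum>b\<in>I. \<Sum>c\<in>I. (cmod (G b c))\<^sup>2)"
proof -
  have "(\<Sum>j\<in>J. (cmod (cinner I (\<phi> j) (\<lambda>b. \<Sum>c\<in>I. G b c * \<phi> j c)))\<^sup>2)
      \<le> (\<Sum>j\<in>J. \<Sum>b\<in>I. (cmod (\<Sum>c\<in>I. G b c * \<phi> j c))\<^sup>2)"
    using orthonormal by (intro sum_mono cmod_cinner_sq_le[OF assms(1)]) auto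
  also have "\<dots> = (\<Sum>b\<in>I. \<Sum>j\<in>J. (cmod (cinner I (\<phi> j) (\<lambda>c. cnj (G b c))))\<^sup>2)"
  proof -
    have "cmod (\<Sum>c\<in>I. G b c * \<phi> j c) = cmod (cinner I (\<phi> j) (\<lambda>c. cnj (G b c)))" for b j
      by (subst complex_mod_cnj[symmetric]) (simp add: cinner_def cnj_sum mult.commute)
    then show ?thesis
      by (subst sum.swap) simp
  qed
  also have "\<dots> \<le> (\<Sum>b\<in>I. \<Sum>c\<in>I. (cmod (cnj (G b c)))\<^sup>2)"
    by (intro sum_mono bessel_inequality[OF assms])
  finally show ?thesis
    by simp
qed

lemma cinner_eigenvector_conjugation_average:
  assumes "finite I" and "orthonormal_cols I U"
    and eigen: "\<forall>b\<in>I. (\<Sum>c\<in>I. U b c * \<phi> c) = l * \<phi> b" and unit: "cinner I \<phi> \<phi> = 1"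
  shows "cinner I \<phi> (\<lambda>b. \<Sum>c\<in>I. (\<Sum>s<T. \<Sum>a\<in>I. cnj (mat_pow I U s a b) * f a * mat_pow I U s a c) * \<phi> c)
       = of_nat T * cinner I \<phi> (Op f \<phi>)"
proof -
  have l: "l * cnj l = 1"
    using unitary_eigenvalue_norm[OF assms] complex_norm_square[of l] by simp
  have power: "(\<Sum>c\<in>I. mat_pow I U s a c * \<phi> c) = l ^ s * \<phi> a" if "a \<in> I" for s a
    by (rule mat_pow_eigenvector[OF assms(1) eigen that])
  have "(\<Sum>c\<in>I. (\<Sum>s<T. \<Sum>a\<in>I. cnj (mat_pow I U s a b) * f a * mat_pow I U s a c) * \<phi> c)
      = (\<Sum>s<T. \<Sum>a\<in>I. cnj (mat_pow I U s a b) * f a * (\<Sum>c\<in>I. mat_pow I U s a c * \<phi> c))" for b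
    by (simp add: sum_distrib_left sum_distrib_right mult.assoc) (rule sum_outer_to_inner)
  then have "cinner I \<phi> (\<lambda>b. \<Sum>c\<in>I. (\<Sum>s<T. \<Sum>a\<in>I. cnj (mat_pow I U s a b) * f a * mat_pow I U s a c) * \<phi> c)
      = (\<Sum>b\<in>I. \<Sum>s<T. \<Sum>a\<in>I. cnj (\<phi> b) * (cnj (mat_pow I U s a b) * f a * (\<Sum>c\<in>I. mat_pow I U s a c * \<phi> c)))"
    by (simp add: cinner_def sum_distrib_left)
  also have "\<dots> = (\<Sum>s<T. \<Sum>a\<in>I. f a * cnj (\<Sum>b\<in>I. mat_pow I U s a b * \<phi> b) * (\<Sum>c\<in>I. mat_pow I U s a c * \<phi> c))"
    by (subst sum_outer_to_inner) (simp add: cnj_sum sum_distrib_left mult_ac)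
  also have "\<dots> = (\<Sum>s<T. \<Sum>a\<in>I. (l * cnj l) ^ s * (cnj (\<phi> a) * (f a * \<phi> a)))"
    using power by (intro sum.cong) (simp_all add: power_mult_distrib mult_ac)
  also have "\<dots> = of_nat T * cinner I \<phi> (Op f \<phi>)"
    by (simp add: l cinner_def Op_def)
  finally show ?thesis .
qed

lemma hilbert_schmidt_conjugation_average:
  fixes P :: "nat \<Rightarrow> 'i \<Rightarrow> 'i \<Rightarrow> complex"
  assumes "finite I"
  shows "(\<Sum>b\<in>I. \<Sum>c\<in>I. (cmod (\<Sum>s<T. \<Sum>a\<in>I. cnj (P s a b) * f a * P s a c))\<^sup>2)
       = (\<Sum>s<T. \<Sum>s'<T. quad_form I f (\<lambda>a a'. (cmod (\<Sum>c\<in>I. P s a c * cnj (P s' a' c)))\<^sup>2))"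
proof -
  define K where "K = {..<T} \<times> I"
  have sum_K: "(\<Sum>k\<in>K. g k) = (\<Sum>s<T. \<Sum>a\<in>I. g (s, a))" for g :: "nat \<times> 'i \<Rightarrow> real"
    by (simp add: K_def sum.cartesian_product)
  have "(\<Sum>s<T. \<Sum>a\<in>I. cnj (P s a b) * f a * P s a c)
      = (\<Sum>k\<in>K. cnj (P (fst k) (snd k) b) * f (snd k) * P (fst k) (snd k) c)" for b c
    by (simp add: K_def sum.cartesian_product split_def)
  then have "(\<Sum>b\<in>I. \<Sum>c\<in>I. (cmod (\<Sum>s<T. \<Sum>a\<in>I. cnj (P s a b) * f a * P s a c))\<^sup>2)
      = (\<Sum>k\<in>K. \<Sum>k'\<in>K. Re (f (snd k) * cnj (f (snd k'))) *
           (cmod (\<Sum>c\<in>I. P (fst k) (snd k) c * cnj (P (fst k') (snd k') c)))\<^sup>2)"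
    using hilbert_schmidt_sum_rank_one[OF assms, where K = K and P = "\<lambda>k. P (fst k) (snd k)"
        and w = "\<lambda>k. f (snd k)"]
    by simp
  also have "\<dots> = (\<Sum>s<T. \<Sum>a\<in>I. \<Sum>s'<T. \<Sum>a'\<in>I. Re (f a * cnj (f a')) *
           (cmod (\<Sum>c\<in>I. P s a c * cnj (P s' a' c)))\<^sup>2)"
    by (simp only: sum_K fst_conv snd_conv)
  also have "\<dots> = (\<Sum>s<T. \<Sum>s'<T. \<Sum>a\<in>I. \<Sum>a'\<in>I. Re (f a * cnj (f a')) *
           (cmod (\<Sum>c\<in>I. P s a c * cnj (P s' a' c)))\<^sup>2)"
    by (intro sum.cong refl) (rule sum.swap)
  finally show ?thesis
    by (simp add: quad_form_eq_sum)
qed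

lemma quad_form_mat_pow_mult_adjoint:
  assumes "finite I" and "orthonormal_rows I U"
  shows "quad_form I f (\<lambda>a a'. (cmod (\<Sum>c\<in>I. mat_pow I U s a c * cnj (mat_pow I U s' a' c)))\<^sup>2)
       = quad_form I f (\<lambda>a a'. (cmod (mat_pow I U (s - s' + (s' - s)) a a'))\<^sup>2)"
proof (cases "s' \<le> s")
  case True
  then show ?thesis
    by (intro quad_form_cong) (simp add: mat_pow_mult_adjoint[OF assms])
next
  case False
  then have "quad_form I f (\<lambda>a a'. (cmod (\<Sum>c\<in>I. mat_pow I U s a c * cnj (mat_pow I U s' a' c)))\<^sup>2)
      = quad_form I f (\<lambda>a a'. (cmod (mat_pow I U (s' - s) a' a))\<^sup>2)"
    by (intro quad_form_cong) (simp add: mat_pow_mult_adjoint[OF assms])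
  then show ?thesis
    using False by (simp add: quad_form_transpose[of I f "\<lambda>a a'. (cmod (mat_pow I U (s' - s) a a'))\<^sup>2"])
qed

lemma sum_sq_diag_Op_le:
  fixes T :: nat
  assumes "finite I" and "orthonormal_rows I U" and "orthonormal_cols I U"
    and eigenbasis: "orthonormal_eigenbasis I n U \<phi>" and "T > 0"
  shows "(\<Sum>j<n. (cmod (cinner I (\<phi> j) (Op f (\<phi> j))))\<^sup>2)
       \<le> (\<Sum>s<T. \<Sum>s'<T. quad_form I f (\<lambda>a a'. (cmod (mat_pow I U (s - s' + (s' - s)) a a'))\<^sup>2))
          / (real T)\<^sup>2"
proof -
  define G where "G b c = (\<Sum>s<T. \<Sum>a\<in>I. cnj (mat_pow I U s a b) * f a * mat_pow I U s a c)" for b c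
  have orthonormal: "\<forall>j\<in>{..<n}. \<forall>j'\<in>{..<n}. cinner I (\<phi> j) (\<phi> j') = (if j = j' then 1 else 0)"
    using eigenbasis by (simp add: orthonormal_eigenbasis_def)
  have diag: "cinner I (\<phi> j) (\<lambda>b. \<Sum>c\<in>I. G b c * \<phi> j c) = of_nat T * cinner I (\<phi> j) (Op f (\<phi> j))"
    if "j < n" for j
  proof -
    obtain l where "\<forall>b\<in>I. (\<Sum>c\<in>I. U b c * \<phi> j c) = l * \<phi> j b"
      using eigenbasis \<open>j < n\<close> unfolding orthonormal_eigenbasis_def by blast
    moreover have "cinner I (\<phi> j) (\<phi> j) = 1"
      using orthonormal \<open>j < n\<close> by simp
    ultimately show ?thesis
      unfolding G_def by (rule cinner_eigenvector_conjugation_average[OF assms(1,3)])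
  qed
  have "(real T)\<^sup>2 * (\<Sum>j<n. (cmod (cinner I (\<phi> j) (Op f (\<phi> j))))\<^sup>2)
      = (\<Sum>j<n. (cmod (cinner I (\<phi> j) (\<lambda>b. \<Sum>c\<in>I. G b c * \<phi> j c)))\<^sup>2)"
    using diag by (simp add: sum_distrib_left norm_mult power_mult_distrib)
  also have "\<dots> \<le> (\<Sum>b\<in>I. \<Sum>c\<in>I. (cmod (G b c))\<^sup>2)"
    by (rule sum_sq_diag_le_hilbert_schmidt[OF assms(1) finite_lessThan orthonormal])
  also have "\<dots> = (\<Sum>s<T. \<Sum>s'<T. quad_form I f
                     (\<lambda>a a'. (cmod (\<Sum>c\<in>I. mat_pow I U s a c * cnj (mat_pow I U s' a' c)))\<^sup>2))"
    unfolding G_def by (rule hilbert_schmidt_conjugation_average[OF assms(1)])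
  also have "\<dots> = (\<Sum>s<T. \<Sum>s'<T. quad_form I f (\<lambda>a a'. (cmod (mat_pow I U (s - s' + (s' - s)) a a'))\<^sup>2))"
    by (simp add: quad_form_mat_pow_mult_adjoint[OF assms(1,2)])
  finally show ?thesis
    using \<open>T > 0\<close> by (simp add: field_simps)
qed

section \<open>Long-time averages\<close>

definition running_mean :: "(real \<Rightarrow> real) \<Rightarrow> real \<Rightarrow> real" where
  "running_mean g K = (1 / K) * integral {0..K} g"

definition has_mean :: "(real \<Rightarrow> real) \<Rightarrow> real \<Rightarrow> bool" where
  "has_mean g L \<longleftrightarrow> (\<forall>a b. g integrable_on {a..b}) \<and> (running_mean g \<longlongrightarrow> L) at_top"

lemma running_mean_Re_cis_tendsto_0:
  assumes "x \<noteq> 0"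
  shows "(running_mean (\<lambda>k. Re (z * cis (k * x))) \<longlongrightarrow> 0) at_top"
proof -
  define F where "F k = (Re z * sin (k * x) + Im z * cos (k * x)) / x" for k
  have "(F has_real_derivative Re (z * cis (k * x))) (at k)" for k
    unfolding F_def using assms by (auto intro!: derivative_eq_intros simp: cis.sel field_simps)
  then have integral: "integral {0..K} (\<lambda>k. Re (z * cis (k * x))) = F K - F 0" if "K \<ge> 0" for K
    using that
    by (intro integral_unique fundamental_theorem_of_calculus)
      (auto simp: has_real_derivative_iff_has_vector_derivative intro: has_vector_derivative_at_within)
  define B where "B = 2 * (\<bar>Re z\<bar> + \<bar>Im z\<bar>) / \<bar>x\<bar>"
  have bound: "\<bar>F K - F 0\<bar> \<le> B" for K
  proof -
    have "\<bar>Re z * sin (K * x)\<bar> \<le> \<bar>Re z\<bar>" and "\<bar>Im z * cos (K * x)\<bar> \<le> \<bar>Im z\<bar>"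
      by (simp_all add: abs_mult mult_left_le)
    then have "\<bar>Re z * sin (K * x) + Im z * cos (K * x) - Im z\<bar> \<le> 2 * (\<bar>Re z\<bar> + \<bar>Im z\<bar>)"
      using abs_triangle_ineq[of "Re z * sin (K * x)" "Im z * cos (K * x)"]
        abs_triangle_ineq4[of "Re z * sin (K * x) + Im z * cos (K * x)" "Im z"] abs_ge_zero[of "Re z"]
      by (smt (verit))
    then show ?thesis
      using assms by (simp add: F_def B_def diff_divide_distrib[symmetric] abs_divide divide_right_mono)
  qed
  have "\<forall>\<^sub>F K in at_top. norm (running_mean (\<lambda>k. Re (z * cis (k * x))) K) \<le> norm (1 / K) * B"
    using eventually_gt_at_top[of 0]
  proof eventually_elim
    case (elim K)
    then show ?case
      unfolding running_mean_def integral[OF less_imp_le[OF elim]]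
      using bound[of K] by (simp add: abs_mult divide_right_mono)
  qed
  moreover have "((\<lambda>K::real. 1 / K) \<longlongrightarrow> 0) at_top"
    using tendsto_divide_0[OF tendsto_const filterlim_at_top_imp_at_infinity[OF filterlim_ident], of 1]
    by simp
  ultimately show ?thesis
    using tendsto_0_le by blast
qed

lemma has_mean_Re_cis: "has_mean (\<lambda>k. Re (z * cis (k * x))) (if x = 0 then Re z else 0)"
proof -
  have "(running_mean (\<lambda>k. Re (z * cis (k * x))) \<longlongrightarrow> (if x = 0 then Re z else 0)) at_top"
  proof (cases "x = 0")
    case True
    have "\<forall>\<^sub>F K in at_top. running_mean (\<lambda>k. Re (z * cis (k * x))) K = Re z"
      using eventually_gt_at_top[of 0] by eventually_elim (simp add: running_mean_def True)
    then show ?thesis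
      using True by (simp add: tendsto_eventually)
  qed (use running_mean_Re_cis_tendsto_0 in simp_all)
  moreover have "(\<lambda>k. Re (z * cis (k * x))) integrable_on {a..b}" for a b
    by (intro integrable_continuous_interval) (simp add: cis_conv_exp, intro continuous_intros)
  ultimately show ?thesis
    by (simp add: has_mean_def)
qed

lemma has_mean_sum:
  assumes "finite A" and "\<And>m. m \<in> A \<Longrightarrow> has_mean (g m) (L m)"
  shows "has_mean (\<lambda>k. \<Sum>m\<in>A. g m k) (\<Sum>m\<in>A. L m)"
proof -
  have "running_mean (\<lambda>k. \<Sum>m\<in>A. g m k) = (\<lambda>K. \<Sum>m\<in>A. running_mean (g m) K)"
    using assms by (auto simp: running_mean_def has_mean_def integral_sum sum_distrib_left)
  then show ?thesis
    using assms by (auto simp: has_mean_def intro!: integrable_sum tendsto_sum)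
qed

lemma has_mean_cmult:
  assumes "has_mean g L"
  shows "has_mean (\<lambda>k. c * g k) (c * L)"
proof -
  have "running_mean (\<lambda>k. c * g k) = (\<lambda>K. c * running_mean g K)"
    by (auto simp: running_mean_def)
  then show ?thesis
    using assms by (auto simp: has_mean_def intro: integrable_cmul[of g, simplified] tendsto_mult_left)
qed

lemma running_mean_limit_le:
  assumes "\<And>K. K \<ge> 0 \<Longrightarrow> g integrable_on {0..K}" and "\<And>k. k \<ge> 0 \<Longrightarrow> g k \<le> h k"
    and "(running_mean g \<longlongrightarrow> V) at_top" and "has_mean h W"
  shows "V \<le> W"
proof (rule tendsto_le[OF _ _ assms(3)])
  show "(running_mean h \<longlongrightarrow> W) at_top"
    using assms(4) by (simp add: has_mean_def)
  show "\<forall>\<^sub>F K in at_top. running_mean g K \<le> running_mean h K"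
    using eventually_gt_at_top[of 0]
  proof eventually_elim
    case (elim K)
    have "integral {0..K} g \<le> integral {0..K} h"
      using assms(1,2,4) elim by (intro integral_le) (auto simp: has_mean_def)
    then show ?case
      using elim by (simp add: running_mean_def divide_right_mono)
  qed
qed simp

definition phase_mat :: "('i \<Rightarrow> real) \<Rightarrow> ('i \<Rightarrow> 'i \<Rightarrow> complex) \<Rightarrow> real \<Rightarrow> 'i \<Rightarrow> 'i \<Rightarrow> complex" where
  "phase_mat L S k b c = cis (k * L b) * S b c"

definition walk_length :: "('i \<Rightarrow> real) \<Rightarrow> 'i list \<Rightarrow> real" where
  "walk_length L xs = (\<Sum>i<length xs - 1. L (xs ! i))"

definition mean_transition :: "'i set \<Rightarrow> ('i \<Rightarrow> real) \<Rightarrow> ('i \<Rightarrow> 'i \<Rightarrow> complex) \<Rightarrow> nat \<Rightarrow> 'i \<Rightarrow> 'i \<Rightarrow> real" where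
  "mean_transition I L S t p q = (\<Sum>x\<in>walks I t p q. \<Sum>y\<in>walks I t p q.
      if walk_length L x = walk_length L y then Re (walk_weight S x * cnj (walk_weight S y)) else 0)"

lemma cis_mult_cnj_cis: "cis a * cnj (cis b) = cis (a - b)"
  by (simp only: cis_cnj cis_mult diff_conv_add_uminus)

lemma orthonormal_rows_phase_mat:
  assumes "orthonormal_rows I S"
  shows "orthonormal_rows I (phase_mat L S k)"
  unfolding orthonormal_rows_def
proof (intro ballI)
  fix b b' assume "b \<in> I" "b' \<in> I"
  have "(\<Sum>c\<in>I. phase_mat L S k b c * cnj (phase_mat L S k b' c))
      = cis (k * L b) * cnj (cis (k * L b')) * (\<Sum>c\<in>I. S b c * cnj (S b' c))"
    by (simp add: phase_mat_def sum_distrib_left mult_ac)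
  then show "(\<Sum>c\<in>I. phase_mat L S k b c * cnj (phase_mat L S k b' c)) = (if b = b' then 1 else 0)"
    using assms \<open>b \<in> I\<close> \<open>b' \<in> I\<close> by (simp add: orthonormal_rows_def cis_mult_cnj_cis)
qed

lemma orthonormal_cols_phase_mat:
  assumes "orthonormal_cols I S"
  shows "orthonormal_cols I (phase_mat L S k)"
proof -
  have "cnj (phase_mat L S k b c) * phase_mat L S k b c' = cnj (S b c) * S b c'" for b c c'
    using cis_mult_cnj_cis[of "k * L b" "k * L b"] by (simp add: phase_mat_def mult_ac)
  then show ?thesis
    using assms by (simp add: orthonormal_cols_def)
qed

lemma prod_cis: "(\<Prod>i\<in>A. cis (g i)) = cis (\<Sum>i\<in>A. g i)"
  by (induction A rule: infinite_finite_induct) (auto simp: cis_mult)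

lemma walk_weight_phase_mat: "walk_weight (phase_mat L S k) xs = cis (k * walk_length L xs) * walk_weight S xs"
  by (simp add: walk_weight_def phase_mat_def prod.distrib prod_cis walk_length_def sum_distrib_left)

lemma has_mean_transition:
  assumes "finite I" and "p \<in> I"
  shows "has_mean (\<lambda>k. (cmod (mat_pow I (phase_mat L S k) t p q))\<^sup>2) (mean_transition I L S t p q)"
proof -
  have phase: "cis (k * walk_length L x) * walk_weight S x * cnj (cis (k * walk_length L y) * walk_weight S y)
      = walk_weight S x * cnj (walk_weight S y) * cis (k * (walk_length L x - walk_length L y))" for k x y
    using cis_mult_cnj_cis[of "k * walk_length L x" "k * walk_length L y"]
    by (simp only: complex_cnj_mult right_diff_distrib mult_ac)
  have "(cmod (mat_pow I (phase_mat L S k) t p q))\<^sup>2 = (\<Sum>x\<in>walks I t p q. \<Sum>y\<in>walks I t p q.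
      Re (walk_weight S x * cnj (walk_weight S y) * cis (k * (walk_length L x - walk_length L y))))" for k
    by (simp only: mat_pow_eq_sum_walks[OF assms] walk_weight_phase_mat cmod_sum_sq phase)
  moreover have "has_mean (\<lambda>k. Re (walk_weight S x * cnj (walk_weight S y) * cis (k * (walk_length L x - walk_length L y))))
      (if walk_length L x = walk_length L y then Re (walk_weight S x * cnj (walk_weight S y)) else 0)" for x y
    using has_mean_Re_cis[of "walk_weight S x * cnj (walk_weight S y)" "walk_length L x - walk_length L y"]
    by (simp only: right_minus_eq)
  ultimately show ?thesis
    unfolding mean_transition_def by (simp only:) (intro has_mean_sum finite_walks assms(1))
qed

lemma has_mean_quad_form_transition:
  assumes "finite I"
  shows "has_mean (\<lambda>k. quad_form I f (\<lambda>a a'. (cmod (mat_pow I (phase_mat L S k) t a a'))\<^sup>2))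
           (quad_form I f (mean_transition I L S t))"
  unfolding quad_form_eq_sum using assms
  by (intro has_mean_sum has_mean_cmult has_mean_transition)

lemma time_average_variance_le:
  fixes T :: nat
  assumes "finite I" and "orthonormal_rows I S" and "orthonormal_cols I S" and "T > 0"
    and eigenbasis: "\<forall>k. orthonormal_eigenbasis I n (phase_mat L S k) (\<phi> k)"
    and "Tr_Op I f = 0"
    and integrable: "\<forall>K\<ge>0. var_integrand I n f \<phi> integrable_on {0..K}"
    and limit: "(running_mean (var_integrand I n f \<phi>) \<longlongrightarrow> V) at_top"
  shows "V \<le> (\<Sum>s<T. \<Sum>s'<T. quad_form I f (mean_transition I L S (s - s' + (s' - s)))) / (real T)\<^sup>2"
proof (rule running_mean_limit_le[OF _ _ limit])
  show "var_integrand I n f \<phi> k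
      \<le> (\<Sum>s<T. \<Sum>s'<T. quad_form I f (\<lambda>a a'. (cmod (mat_pow I (phase_mat L S k) (s - s' + (s' - s)) a a'))\<^sup>2))
         / (real T)\<^sup>2" for k
    using sum_sq_diag_Op_le[OF assms(1) orthonormal_rows_phase_mat[OF assms(2)]
        orthonormal_cols_phase_mat[OF assms(3)] eigenbasis[rule_format] assms(4)] assms(6)
    by (simp add: var_integrand_def)
  show "has_mean (\<lambda>k. (\<Sum>s<T. \<Sum>s'<T. quad_form I f (\<lambda>a a'. (cmod (mat_pow I (phase_mat L S k) (s - s' + (s' - s)) a a'))\<^sup>2))
         / (real T)\<^sup>2)
      ((\<Sum>s<T. \<Sum>s'<T. quad_form I f (mean_transition I L S (s - s' + (s' - s)))) / (real T)\<^sup>2)"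
    using has_mean_cmult[of _ _ "1 / (real T)\<^sup>2"] assms(1)
    by (simp add: has_mean_sum has_mean_quad_form_transition)
qed (use integrable in auto)

lemma mean_transition_eq:
  assumes "finite I" and "a \<in> I"
  shows "mean_transition I L S t a a' = mat_pow I (\<lambda>b c. (cmod (S b c))\<^sup>2) t a a'
     + (\<Sum>x\<in>walks I t a a'. \<Sum>y\<in>walks I t a a'.
          if x \<noteq> y \<and> walk_length L x = walk_length L y then Re (walk_weight S x * cnj (walk_weight S y)) else 0)"
proof -
  have "mean_transition I L S t a a' = (\<Sum>x\<in>walks I t a a'. \<Sum>y\<in>walks I t a a'.
       (if x = y then (cmod (walk_weight S x))\<^sup>2 else 0)
       + (if x \<noteq> y \<and> walk_length L x = walk_length L y then Re (walk_weight S x * cnj (walk_weight S y)) else 0))"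
    unfolding mean_transition_def by (intro sum.cong refl) (auto simp: cmod_sq_eq_Re)
  also have "\<dots> = (\<Sum>x\<in>walks I t a a'. (cmod (walk_weight S x))\<^sup>2)
     + (\<Sum>x\<in>walks I t a a'. \<Sum>y\<in>walks I t a a'.
          if x \<noteq> y \<and> walk_length L x = walk_length L y then Re (walk_weight S x * cnj (walk_weight S y)) else 0)"
    using finite_walks[OF assms(1)] by (simp add: sum.distrib)
  finally show ?thesis
    by (simp add: mat_pow_eq_sum_walks[OF assms] walk_weight_norm_sq)
qed

lemma quad_form_mean_transition_0:
  assumes "finite I"
  shows "quad_form I f (mean_transition I L S 0) = (\<Sum>b\<in>I. (cmod (f b))\<^sup>2)"
proof -
  have "mean_transition I L S 0 a a' = (if a = a' then 1 else 0)" if "a \<in> I" for a a'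
    using that by (simp add: mean_transition_def walks_0 walk_weight_def)
  then have "quad_form I f (mean_transition I L S 0) = (\<Sum>a\<in>I. Re (f a * cnj (f a)))"
    using assms by (simp add: quad_form_eq_sum if_distrib[of "\<lambda>x. _ * x"] cong: if_cong)
  then show ?thesis
    by (simp add: cmod_sq_eq_Re)
qed

lemma abs_sum_offdiag_le:
  "\<bar>\<Sum>x\<in>W. \<Sum>y\<in>W. if x \<noteq> y \<and> P x y then Re (A x * cnj (A y)) else 0\<bar>
    \<le> (\<Sum>x\<in>W. \<Sum>y\<in>W. if x \<noteq> y then cmod (A x) * cmod (A y) else 0)"
proof -
  have "\<bar>if x \<noteq> y \<and> P x y then Re (A x * cnj (A y)) else 0\<bar> \<le> (if x \<noteq> y then cmod (A x) * cmod (A y) else 0)"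
    for x y
    using abs_Re_le_cmod[of "A x * cnj (A y)"] by (simp add: norm_mult)
  then show ?thesis
    by (intro order_trans[OF sum_abs] sum_mono order_trans[OF sum_abs]) auto
qed

lemma quad_form_mean_transition_le:
  assumes "finite I" and bounded: "\<forall>b\<in>I. cmod (f b) \<le> \<kappa>"
  shows "quad_form I f (mean_transition I L S t)
       \<le> quad_form I f (mat_pow I (\<lambda>b c. (cmod (S b c))\<^sup>2) t)
         + \<kappa>\<^sup>2 * (\<Sum>a\<in>I. \<Sum>a'\<in>I. \<Sum>x\<in>walks I t a a'. \<Sum>y\<in>walks I t a a'.
                  if x \<noteq> y then cmod (walk_weight S x) * cmod (walk_weight S y) else 0)"
proof -
  define Off where "Off a a' = (\<Sum>x\<in>walks I t a a'. \<Sum>y\<in>walks I t a a'.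
      if x \<noteq> y \<and> walk_length L x = walk_length L y then Re (walk_weight S x * cnj (walk_weight S y)) else 0)"
    for a a'
  define D where "D a a' = (\<Sum>x\<in>walks I t a a'. \<Sum>y\<in>walks I t a a'.
      if x \<noteq> y then cmod (walk_weight S x) * cmod (walk_weight S y) else 0)" for a a'
  have "Re (f a * cnj (f a')) * Off a a' \<le> \<kappa>\<^sup>2 * D a a'" if "a \<in> I" "a' \<in> I" for a a'
  proof -
    have "\<bar>Re (f a * cnj (f a'))\<bar> \<le> cmod (f a) * cmod (f a')"
      using abs_Re_le_cmod[of "f a * cnj (f a')"] by (simp add: norm_mult)
    also have "\<dots> \<le> \<kappa>\<^sup>2"
      using bounded that order_trans[OF norm_ge_zero, of "f a" \<kappa>] unfolding power2_eq_square
      by (intro mult_mono) auto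
    moreover have "\<bar>Off a a'\<bar> \<le> D a a'"
      unfolding Off_def D_def by (rule abs_sum_offdiag_le)
    ultimately have "\<bar>Re (f a * cnj (f a'))\<bar> * \<bar>Off a a'\<bar> \<le> \<kappa>\<^sup>2 * D a a'"
      by (intro mult_mono) auto
    then show ?thesis
      by (metis abs_ge_self abs_mult order_trans)
  qed
  then have "(\<Sum>a\<in>I. \<Sum>a'\<in>I. Re (f a * cnj (f a')) * Off a a') \<le> \<kappa>\<^sup>2 * (\<Sum>a\<in>I. \<Sum>a'\<in>I. D a a')"
    by (simp add: sum_distrib_left sum_mono)
  moreover have "quad_form I f (mean_transition I L S t)
      = quad_form I f (mat_pow I (\<lambda>b c. (cmod (S b c))\<^sup>2) t) + (\<Sum>a\<in>I. \<Sum>a'\<in>I. Re (f a * cnj (f a')) * Off a a')"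
    by (simp add: quad_form_eq_sum mean_transition_eq[OF assms(1)] Off_def distrib_left sum.distrib)
  ultimately show ?thesis
    by (simp add: D_def)
qed

section \<open>Non-backtracking walks that meet again close a cycle\<close>

text \<open>The closed path that follows \<open>x\<close> from its \<open>i\<close>-th bond for \<open>m\<close> bonds and returns along
the corresponding bonds of \<open>y\<close>, reversed.\<close>

definition detour :: "('a \<times> 'a) list \<Rightarrow> ('a \<times> 'a) list \<Rightarrow> nat \<Rightarrow> nat \<Rightarrow> ('a \<times> 'a) list" where
  "detour x y i m = map (\<lambda>n. if n < m then x ! (i + n) else prod.swap (y ! (i + 2 * m - 1 - n))) [0..<2 * m]"

lemma length_detour [simp]: "length (detour x y i m) = 2 * m"
  by (simp add: detour_def)

lemma nth_detour:
  "n < 2 * m \<Longrightarrow> detour x y i m ! n = (if n < m then x ! (i + n) else prod.swap (y ! (i + 2 * m - 1 - n)))"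
  by (simp add: detour_def)

lemma detour_consecutive:
  fixes x y :: "('a \<times> 'a) list"
  assumes step_x: "\<And>k. k < t \<Longrightarrow> snd (x ! k) = fst (x ! Suc k) \<and> x ! Suc k \<noteq> prod.swap (x ! k)"
    and step_y: "\<And>k. k < t \<Longrightarrow> snd (y ! k) = fst (y ! Suc k) \<and> y ! Suc k \<noteq> prod.swap (y ! k)"
    and "1 \<le> i" and "1 \<le> m" and "i + m \<le> t"
    and agree: "x ! (i - 1) = y ! (i - 1)" "x ! (i + m) = y ! (i + m)"
    and differ: "x ! i \<noteq> y ! i" "x ! (i + m - 1) \<noteq> y ! (i + m - 1)"
    and "n < 2 * m"
  defines "ps \<equiv> detour x y i m"
  shows "snd (ps ! n) = fst (ps ! ((n + 1) mod (2 * m))) \<and> ps ! ((n + 1) mod (2 * m)) \<noteq> prod.swap (ps ! n)"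
proof -
  consider "n + 1 < m" | "n + 1 = m" | "m \<le> n" "n + 1 < 2 * m" | "n + 1 = 2 * m"
    using \<open>n < 2 * m\<close> by linarith
  then show ?thesis
  proof cases
    case 1
    then show ?thesis
      using step_x[of "i + n"] \<open>i + m \<le> t\<close> by (simp add: ps_def nth_detour)
  next
    case 2
    then have "ps ! n = x ! (i + n)" "ps ! ((n + 1) mod (2 * m)) = prod.swap (y ! (i + n))"
      by (simp_all add: ps_def nth_detour add.commute flip: 2)
    moreover have "snd (x ! (i + n)) = snd (y ! (i + n))"
      using step_x[of "i + n"] step_y[of "i + n"] agree(2) \<open>i + m \<le> t\<close> by (simp flip: 2)
    moreover have "x ! (i + n) \<noteq> y ! (i + n)"
      using differ(2) by (simp flip: 2)
    ultimately show ?thesis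
      by (metis prod.swap_def snd_conv swap_swap)
  next
    case 3
    define k where "k = i + 2 * m - 2 - n"
    have "k < t" "i + 2 * m - 1 - n = Suc k" "i + 2 * m - 1 - (n + 1) = k"
      using 3 \<open>i + m \<le> t\<close> by (auto simp: k_def)
    then have "ps ! n = prod.swap (y ! Suc k)" "ps ! ((n + 1) mod (2 * m)) = prod.swap (y ! k)"
      using 3 by (simp_all add: ps_def nth_detour)
    then show ?thesis
      using step_y[OF \<open>k < t\<close>] by (auto simp: prod.swap_def)
  next
    case 4
    then have "snd (x ! (i - 1)) = fst (x ! i)" and "snd (y ! (i - 1)) = fst (y ! i)"
      using step_x[of "i - 1"] step_y[of "i - 1"] \<open>1 \<le> i\<close> \<open>i + m \<le> t\<close> by auto
    then show ?thesis
      using 4 agree differ \<open>1 \<le> m\<close> by (auto simp: ps_def nth_detour prod_eq_iff)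
  qed
qed

lemma detour_is_cycle:
  fixes x y :: "(nat \<times> nat) list"
  assumes sym: "\<forall>u v. E u v \<longrightarrow> E v u"
    and bonds: "set x \<subseteq> dbonds E" "set y \<subseteq> dbonds E" "length x = Suc t" "length y = Suc t"
    and step_x: "\<And>k. k < t \<Longrightarrow> snd (x ! k) = fst (x ! Suc k) \<and> x ! Suc k \<noteq> prod.swap (x ! k)"
    and step_y: "\<And>k. k < t \<Longrightarrow> snd (y ! k) = fst (y ! Suc k) \<and> y ! Suc k \<noteq> prod.swap (y ! k)"
    and "1 \<le> i" and "1 \<le> m" and "i + m \<le> t"
    and agree: "x ! (i - 1) = y ! (i - 1)" "x ! (i + m) = y ! (i + m)"
    and differ: "x ! i \<noteq> y ! i" "x ! (i + m - 1) \<noteq> y ! (i + m - 1)"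
  shows "is_cycle E (detour x y i m)"
proof -
  have "x ! k \<in> dbonds E" "prod.swap (y ! k) \<in> dbonds E" if "k \<le> t" for k
  proof -
    have "x ! k \<in> set x" "y ! k \<in> set y"
      using bonds(3,4) that by auto
    then show "x ! k \<in> dbonds E" "prod.swap (y ! k) \<in> dbonds E"
      using bonds(1,2) sym by (auto simp: dbonds_def prod.swap_def)
  qed
  then have "set (detour x y i m) \<subseteq> dbonds E"
    using \<open>i + m \<le> t\<close> by (auto simp: detour_def)
  moreover have "detour x y i m \<noteq> []"
    using \<open>1 \<le> m\<close> by (auto simp: detour_def)
  ultimately show ?thesis
    using detour_consecutive[OF step_x step_y \<open>1 \<le> i\<close> \<open>1 \<le> m\<close> \<open>i + m \<le> t\<close> agree differ]
    unfolding is_cycle_def prod.swap_def length_detour by blast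
qed

lemma first_divergence_on_cycle:
  fixes x y :: "(nat \<times> nat) list"
  assumes sym: "\<forall>u v. E u v \<longrightarrow> E v u"
    and bonds: "set x \<subseteq> dbonds E" "set y \<subseteq> dbonds E" "length x = Suc t" "length y = Suc t"
    and step_x: "\<And>k. k < t \<Longrightarrow> snd (x ! k) = fst (x ! Suc k) \<and> x ! Suc k \<noteq> prod.swap (x ! k)"
    and step_y: "\<And>k. k < t \<Longrightarrow> snd (y ! k) = fst (y ! Suc k) \<and> y ! Suc k \<noteq> prod.swap (y ! k)"
    and ends: "x ! 0 = y ! 0" "x ! t = y ! t" and "x \<noteq> y" and "t \<le> T"
  obtains i where "1 \<le> i" "i \<le> t" "take i x = take i y" "ubond (x ! i) \<in> cycle_bonds E (2 * T)"
proof -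
  define D where "D = {k. k \<le> t \<and> x ! k \<noteq> y ! k}"
  have "finite D" by (simp add: D_def)
  have "D \<noteq> {}"
  proof
    assume "D = {}"
    then have "x = y"
      using bonds(3,4) by (intro nth_equalityI) (auto simp: D_def less_Suc_eq_le)
    with \<open>x \<noteq> y\<close> show False ..
  qed
  define i where "i = Min D"
  define j where "j = Max D"
  have "i \<in> D" "j \<in> D" "i \<le> j"
    using \<open>finite D\<close> \<open>D \<noteq> {}\<close> by (simp_all add: i_def j_def)
  have "1 \<le> i"
    using \<open>i \<in> D\<close> ends(1) by (cases i) (auto simp: D_def)
  have "j < t"
    using \<open>j \<in> D\<close> ends(2) by (auto simp: D_def le_less)
  have before: "x ! k = y ! k" if "k < i" for k
  proof (rule ccontr)
    assume "x ! k \<noteq> y ! k"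
    then have "k \<in> D" using that \<open>i \<le> j\<close> \<open>j < t\<close> by (simp add: D_def)
    then show False using Min_le[OF \<open>finite D\<close>] that by (fastforce simp: i_def)
  qed
  have after: "x ! k = y ! k" if "j < k" "k \<le> t" for k
  proof (rule ccontr)
    assume "x ! k \<noteq> y ! k"
    then have "k \<in> D" using that by (simp add: D_def)
    then show False using Max_ge[OF \<open>finite D\<close>] that by (fastforce simp: j_def)
  qed
  have "is_cycle E (detour x y i (j - i + 1))"
    using detour_is_cycle[OF sym bonds step_x step_y \<open>1 \<le> i\<close>, of "j - i + 1"]
      before[of "i - 1"] after[of "j + 1"] \<open>i \<in> D\<close> \<open>j \<in> D\<close> \<open>1 \<le> i\<close> \<open>i \<le> j\<close> \<open>j < t\<close>
    by (auto simp: D_def)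
  moreover have "x ! i \<in> set (detour x y i (j - i + 1))"
    using nth_detour[of 0 "j - i + 1" x y i] nth_mem[of 0 "detour x y i (j - i + 1)"] by simp
  ultimately have "ubond (x ! i) \<in> cycle_bonds E (2 * T)"
    using \<open>j < t\<close> \<open>t \<le> T\<close> unfolding cycle_bonds_def by force
  moreover have "take i x = take i y"
    using before bonds(3,4) \<open>i \<le> j\<close> \<open>j < t\<close> by (intro nth_equalityI) auto
  ultimately show ?thesis
    using that \<open>1 \<le> i\<close> \<open>i \<le> j\<close> \<open>j < t\<close> by simp
qed

lemma finite_dbonds: "simple_graph Vs E \<Longrightarrow> finite (dbonds E)"
  by (rule finite_subset[of _ "Vs \<times> Vs"]) (auto simp: simple_graph_def dbonds_def)

lemma finite_neighbours: "simple_graph Vs E \<Longrightarrow> finite {w. E v w}"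
  by (rule finite_subset[of _ Vs]) (auto simp: simple_graph_def)

lemma sum_dbonds_from:
  assumes "simple_graph Vs E"
  shows "(\<Sum>c\<in>dbonds E. if fst c = v then F (snd c) else 0) = (\<Sum>w\<in>{w. E v w}. F w)"
proof -
  have "{c\<in>dbonds E. fst c = v} = Pair v ` {w. E v w}"
    by (auto simp: dbonds_def)
  then show ?thesis
    using finite_dbonds[OF assms] by (simp add: sum.inter_filter[symmetric] sum.reindex inj_on_def)
qed

lemma sum_dbonds_into:
  assumes "simple_graph Vs E"
  shows "(\<Sum>b\<in>dbonds E. if snd b = v then F (fst b) else 0) = (\<Sum>u\<in>{u. E v u}. F u)"
proof -
  have "{b\<in>dbonds E. snd b = v} = (\<lambda>u. (u, v)) ` {u. E v u}"
    using assms by (auto simp: dbonds_def simple_graph_def)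
  then show ?thesis
    using finite_dbonds[OF assms] by (simp add: sum.inter_filter[symmetric] sum.reindex inj_on_def)
qed

lemma orthonormal_rows_Smat:
  assumes "simple_graph Vs E" and "vertex_matrices_ok Vs E \<sigma>"
  shows "orthonormal_rows (dbonds E) (Smat \<sigma>)"
  unfolding orthonormal_rows_def
proof (intro ballI)
  fix b b' assume b: "b \<in> dbonds E" and b': "b' \<in> dbonds E"
  show "(\<Sum>c\<in>dbonds E. Smat \<sigma> b c * cnj (Smat \<sigma> b' c)) = (if b = b' then 1 else 0)"
  proof (cases "snd b = snd b'")
    case False
    then show ?thesis
      by (auto simp: Smat_def intro!: sum.neutral)
  next
    case True
    define v where "v = snd b"
    have "E v (fst b)" "E v (fst b')" "v \<in> Vs"
      using b b' True assms(1) by (auto simp: dbonds_def v_def simple_graph_def)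
    have "(\<Sum>c\<in>dbonds E. Smat \<sigma> b c * cnj (Smat \<sigma> b' c))
        = (\<Sum>c\<in>dbonds E. if fst c = v then \<sigma> v (snd c) (fst b) * cnj (\<sigma> v (snd c) (fst b')) else 0)"
      using True by (intro sum.cong) (auto simp: Smat_def v_def)
    also have "\<dots> = (\<Sum>w\<in>{w. E v w}. \<sigma> v w (fst b) * cnj (\<sigma> v w (fst b')))"
      by (rule sum_dbonds_from[OF assms(1)])
    also have "\<dots> = cnj (\<Sum>w\<in>{w. E v w}. cnj (\<sigma> v w (fst b)) * \<sigma> v w (fst b'))"
      by (simp add: mult.commute)
    also have "\<dots> = cnj (if fst b = fst b' then 1 else 0)"
      using assms(2) \<open>v \<in> Vs\<close> \<open>E v (fst b)\<close> \<open>E v (fst b')\<close>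
      by (simp add: vertex_matrices_ok_def unitary_on_def)
    finally show ?thesis
      using True by (auto simp: prod_eq_iff)
  qed
qed

lemma orthonormal_cols_Smat:
  assumes "simple_graph Vs E" and "vertex_matrices_ok Vs E \<sigma>"
  shows "orthonormal_cols (dbonds E) (Smat \<sigma>)"
  unfolding orthonormal_cols_def
proof (intro ballI)
  fix c c' assume c: "c \<in> dbonds E" and c': "c' \<in> dbonds E"
  show "(\<Sum>b\<in>dbonds E. cnj (Smat \<sigma> b c) * Smat \<sigma> b c') = (if c = c' then 1 else 0)"
  proof (cases "fst c = fst c'")
    case False
    then show ?thesis
      by (auto simp: Smat_def intro!: sum.neutral)
  next
    case True
    define v where "v = fst c"
    have "E v (snd c)" "E v (snd c')" "v \<in> Vs"
      using c c' True assms(1) by (auto simp: dbonds_def v_def simple_graph_def)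
    have "(\<Sum>b\<in>dbonds E. cnj (Smat \<sigma> b c) * Smat \<sigma> b c')
        = (\<Sum>b\<in>dbonds E. if snd b = v then cnj (\<sigma> v (snd c) (fst b)) * \<sigma> v (snd c') (fst b) else 0)"
      using True by (intro sum.cong) (auto simp: Smat_def v_def)
    also have "\<dots> = (\<Sum>u\<in>{u. E v u}. cnj (\<sigma> v (snd c) u) * \<sigma> v (snd c') u)"
      by (rule sum_dbonds_into[OF assms(1)])
    also have "\<dots> = cnj (\<Sum>u\<in>{u. E v u}. \<sigma> v (snd c) u * cnj (\<sigma> v (snd c') u))"
      by (simp add: mult.commute)
    also have "\<dots> = cnj (if snd c = snd c' then 1 else 0)"
      using assms(2) \<open>v \<in> Vs\<close> \<open>E v (snd c)\<close> \<open>E v (snd c')\<close>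
      by (simp add: vertex_matrices_ok_def unitary_on_def)
    finally show ?thesis
      using True by (auto simp: prod_eq_iff)
  qed
qed

lemma Smat_nonzero_step:
  assumes "simple_graph Vs E" and "no_backscattering Vs E \<sigma>"
    and "a \<in> dbonds E" and "Smat \<sigma> a b \<noteq> 0"
  shows "snd a = fst b \<and> b \<noteq> prod.swap a"
proof
  show "snd a = fst b"
    using assms(4) by (auto simp: Smat_def split: if_splits)
  have "snd a \<in> Vs" "E (snd a) (fst a)"
    using assms(1,3) by (auto simp: dbonds_def simple_graph_def)
  then have "Smat \<sigma> a (prod.swap a) = 0"
    using assms(2) by (simp add: Smat_def no_backscattering_def prod.swap_def)
  then show "b \<noteq> prod.swap a"
    using assms(4) by auto
qed

lemma card_Smat_successors_le:
  assumes "regular_graph Vs E d" and "no_backscattering Vs E \<sigma>" and "a \<in> dbonds E"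
  shows "card {b\<in>dbonds E. Smat \<sigma> a b \<noteq> 0} \<le> d - 1"
proof -
  have graph: "simple_graph Vs E"
    using assms(1) by (simp add: regular_graph_def)
  then have "snd a \<in> Vs" "E (snd a) (fst a)"
    using assms(3) by (auto simp: dbonds_def simple_graph_def)
  have "{b\<in>dbonds E. Smat \<sigma> a b \<noteq> 0} \<subseteq> Pair (snd a) ` ({w. E (snd a) w} - {fst a})"
  proof
    fix b assume b: "b \<in> {b\<in>dbonds E. Smat \<sigma> a b \<noteq> 0}"
    then have "snd a = fst b \<and> b \<noteq> prod.swap a"
      using Smat_nonzero_step[OF graph assms(2,3), of b] by simp
    then have "fst b = snd a" "snd b \<noteq> fst a"
      by (auto simp: prod.swap_def prod_eq_iff)
    then show "b \<in> Pair (snd a) ` ({w. E (snd a) w} - {fst a})"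
      using b by (auto simp: dbonds_def image_iff prod_eq_iff)
  qed
  then have "card {b\<in>dbonds E. Smat \<sigma> a b \<noteq> 0} \<le> card ({w. E (snd a) w} - {fst a})"
    using finite_neighbours[OF graph] by (meson card_image_le card_mono finite_Diff finite_imageI order_trans)
  also have "\<dots> = d - 1"
    using assms(1) \<open>snd a \<in> Vs\<close> \<open>E (snd a) (fst a)\<close> finite_neighbours[OF graph]
    by (simp add: regular_graph_def card_Diff_singleton)
  finally show ?thesis .
qed

lemma Umat_eq_phase_mat: "Umat \<sigma> Lu k = phase_mat (\<lambda>b. Lu (ubond b)) (Smat \<sigma>) k"
  by (intro ext) (simp add: Umat_def phase_mat_def cis_conv_exp mult.commute)

section \<open>Pairs of walks with equal endpoints\<close>

definition short_cycle_dbonds :: "(nat \<Rightarrow> nat \<Rightarrow> bool) \<Rightarrow> nat \<Rightarrow> (nat \<times> nat) set" where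
  "short_cycle_dbonds E n = {e\<in>dbonds E. ubond e \<in> cycle_bonds E n}"

lemma card_short_cycle_dbonds_le:
  assumes "simple_graph Vs E"
  shows "card (short_cycle_dbonds E n) \<le> 2 * card (cycle_bonds E n)"
proof -
  have "cycle_bonds E n \<subseteq> ubond ` dbonds E"
    by (auto simp: cycle_bonds_def is_cycle_def)
  then have "finite (cycle_bonds E n)"
    using finite_dbonds[OF assms] finite_subset by blast
  have fibre: "card {e\<in>dbonds E. ubond e = u} \<le> 2" for u
  proof (cases "\<exists>e0\<in>dbonds E. ubond e0 = u")
    case True
    then obtain e0 where "ubond e0 = u" by blast
    then have "{e\<in>dbonds E. ubond e = u} \<subseteq> {e0, prod.swap e0}"
      by (auto simp: ubond_def doubleton_eq_iff prod_eq_iff prod.swap_def)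
    then have "card {e\<in>dbonds E. ubond e = u} \<le> card {e0, prod.swap e0}"
      by (rule card_mono[rotated]) simp
    also have "\<dots> \<le> 2"
      by (simp add: card_insert_if)
    finally show ?thesis .
  next
    case False
    then have "{e\<in>dbonds E. ubond e = u} = {}" by auto
    then show ?thesis by (metis card.empty zero_le)
  qed
  have "short_cycle_dbonds E n = (\<Union>u\<in>cycle_bonds E n. {e\<in>dbonds E. ubond e = u})"
    by (auto simp: short_cycle_dbonds_def)
  then have "card (short_cycle_dbonds E n) \<le> (\<Sum>u\<in>cycle_bonds E n. card {e\<in>dbonds E. ubond e = u})"
    by (simp add: card_UN_le[OF \<open>finite (cycle_bonds E n)\<close>])
  also have "\<dots> \<le> (\<Sum>u\<in>cycle_bonds E n. 2)"
    by (intro sum_mono fibre)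
  also have "\<dots> = 2 * card (cycle_bonds E n)"
    by simp
  finally show ?thesis .
qed

lemma successively_Cons_drop:
  assumes "successively R xs" and "0 < i" and "i \<le> length xs"
  shows "successively R (xs ! (i - 1) # drop i xs)"
proof -
  have "drop (i - 1) xs = xs ! (i - 1) # drop i xs"
    using assms(2,3) Cons_nth_drop_Suc[of "i - 1" xs] by simp
  moreover have "successively R (drop (i - 1) xs)"
    using assms(1) by (metis append_take_drop_id successively_append_iff)
  ultimately show ?thesis by simp
qed

lemma card_successively_Cons_le:
  fixes r :: nat
  assumes "finite I" and degree: "\<forall>a\<in>I. card {b\<in>I. R a b} \<le> r" and "a \<in> I"
  shows "card {ys. length ys = m \<and> set ys \<subseteq> I \<and> successively R (a # ys)} \<le> r ^ m"
  using assms(3)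
proof (induction m arbitrary: a)
  case 0
  have "{ys. length ys = 0 \<and> set ys \<subseteq> I \<and> successively R (a # ys)} = {[]}"
    by auto
  then show ?case by simp
next
  case (Suc m)
  define N where "N = {b\<in>I. R a b}"
  define X where "X b = {ys. length ys = m \<and> set ys \<subseteq> I \<and> successively R (b # ys)}" for b
  have finite_X: "finite (X b)" for b
    by (rule finite_subset[OF _ finite_lists_length_eq[OF assms(1), of m]]) (auto simp: X_def)
  have "finite N" using assms(1) by (simp add: N_def)
  have extensions: "{ys. length ys = Suc m \<and> set ys \<subseteq> I \<and> successively R (a # ys)} \<subseteq> (\<lambda>(b, ys). b # ys) ` Sigma N X"
  proof
    fix xs assume xs: "xs \<in> {ys. length ys = Suc m \<and> set ys \<subseteq> I \<and> successively R (a # ys)}"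
    then obtain b ys where "xs = b # ys" by (cases xs) auto
    moreover have "b \<in> N" "ys \<in> X b" using xs \<open>xs = b # ys\<close> by (auto simp: N_def X_def)
    ultimately show "xs \<in> (\<lambda>(b, ys). b # ys) ` Sigma N X" by force
  qed
  have "card {ys. length ys = Suc m \<and> set ys \<subseteq> I \<and> successively R (a # ys)}
      \<le> card ((\<lambda>(b, ys). b # ys) ` Sigma N X)"
    by (rule card_mono[OF finite_imageI[OF finite_SigmaI[OF \<open>finite N\<close> finite_X]] extensions])
  also have "\<dots> \<le> card (Sigma N X)"
    by (rule card_image_le[OF finite_SigmaI[OF \<open>finite N\<close> finite_X]])
  also have "\<dots> = (\<Sum>b\<in>N. card (X b))"
    using \<open>finite N\<close> finite_X by (simp add: card_SigmaI)
  also have "\<dots> \<le> card N * r ^ m"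
    using Suc.IH sum_bounded_above[of N "\<lambda>b. card (X b)" "r ^ m"] by (auto simp: N_def X_def)
  also have "\<dots> \<le> r ^ Suc m"
    using degree Suc.prems by (simp add: N_def)
  finally show ?case .
qed

lemma partner_walk_shares_prefix:
  assumes graph: "simple_graph Vs E" and "no_backscattering Vs E \<sigma>" and "t \<le> T"
    and x: "x \<in> walks (dbonds E) t p q" "walk_weight (Smat \<sigma>) x \<noteq> 0"
    and y: "y \<in> walks (dbonds E) t p q" "walk_weight (Smat \<sigma>) y \<noteq> 0" "y \<noteq> x"
  obtains i where "1 \<le> i" "i \<le> t" "x ! i \<in> short_cycle_dbonds E (2 * T)" "y = take i x @ drop i y"
    "successively (\<lambda>a b. a \<in> dbonds E \<and> b \<in> dbonds E \<and> Smat \<sigma> a b \<noteq> 0) (x ! (i - 1) # drop i y)"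
proof -
  define R where "R = (\<lambda>a b. a \<in> dbonds E \<and> b \<in> dbonds E \<and> Smat \<sigma> a b \<noteq> 0)"
  have steps: "snd (z ! k) = fst (z ! Suc k) \<and> z ! Suc k \<noteq> prod.swap (z ! k)"
    if "successively R z" "Suc k < length z" for z k
    using Smat_nonzero_step[OF graph assms(2)] that by (auto simp: R_def successively_conv_nth)
  have walk_x: "set x \<subseteq> dbonds E" "length x = Suc t" "x ! 0 = p" "x ! t = q"
    and walk_y: "set y \<subseteq> dbonds E" "length y = Suc t" "y ! 0 = p" "y ! t = q"
    using x(1) y(1) by (auto simp: walks_def)
  have "successively R x" "successively R y"
    unfolding R_def using successively_walk_weight_nonzero x(2) y(2) walk_x(1) walk_y(1) by blast+
  obtain i where i: "1 \<le> i" "i \<le> t" "take i x = take i y" "ubond (x ! i) \<in> cycle_bonds E (2 * T)"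
    using first_divergence_on_cycle[of E x y t T] graph walk_x walk_y y(3) assms(3)
      steps[OF \<open>successively R x\<close>] steps[OF \<open>successively R y\<close>]
    by (auto simp: simple_graph_def)
  then have "x ! i \<in> short_cycle_dbonds E (2 * T)"
    using walk_x by (auto simp: short_cycle_dbonds_def)
  moreover have "y ! (i - 1) = x ! (i - 1)"
    using i by (metis diff_less less_le_trans nth_take zero_less_one)
  then have "successively R (x ! (i - 1) # drop i y)"
    using successively_Cons_drop[OF \<open>successively R y\<close>, of i] i walk_y by simp
  moreover have "y = take i x @ drop i y"
    using i(3) by simp
  ultimately show ?thesis
    using that i(1,2) by (simp add: R_def)
qed

lemma card_partner_walks_le:
  assumes "regular_graph Vs E d" and "no_backscattering Vs E \<sigma>" and "t \<le> T"
    and x: "x \<in> walks (dbonds E) t p q" and "walk_weight (Smat \<sigma>) x \<noteq> 0"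
  shows "real (card {y\<in>walks (dbonds E) t p q. y \<noteq> x \<and> walk_weight (Smat \<sigma>) y \<noteq> 0})
       \<le> (\<Sum>i\<in>{1..t}. if x ! i \<in> short_cycle_dbonds E (2 * T) then real (d - 1) ^ (t + 1 - i) else 0)"
proof -
  define I where "I = dbonds E"
  define R where "R = (\<lambda>a b. a \<in> I \<and> b \<in> I \<and> Smat \<sigma> a b \<noteq> 0)"
  define X where "X i = {ys. length ys = t + 1 - i \<and> set ys \<subseteq> I \<and> successively R (x ! (i - 1) # ys)}" for i
  define J where "J = {i\<in>{1..t}. x ! i \<in> short_cycle_dbonds E (2 * T)}"
  have graph: "simple_graph Vs E"
    using assms(1) by (simp add: regular_graph_def)
  have "finite I"
    using finite_dbonds[OF graph] by (simp add: I_def)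
  have partners: "{y\<in>walks I t p q. y \<noteq> x \<and> walk_weight (Smat \<sigma>) y \<noteq> 0} \<subseteq> (\<Union>i\<in>J. (\<lambda>ys. take i x @ ys) ` X i)"
  proof
    fix y assume y: "y \<in> {y\<in>walks I t p q. y \<noteq> x \<and> walk_weight (Smat \<sigma>) y \<noteq> 0}"
    then obtain i where "1 \<le> i" "i \<le> t" "x ! i \<in> short_cycle_dbonds E (2 * T)"
      and prefix: "y = take i x @ drop i y" and "successively R (x ! (i - 1) # drop i y)"
      using partner_walk_shares_prefix[OF graph assms(2,3) x assms(5)] by (auto simp: I_def R_def)
    moreover have "set (drop i y) \<subseteq> I" "length (drop i y) = t + 1 - i"
      using y by (auto simp: walks_def dest: in_set_dropD)
    ultimately have "i \<in> J" "drop i y \<in> X i"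
      by (simp_all add: J_def X_def)
    then show "y \<in> (\<Union>i\<in>J. (\<lambda>ys. take i x @ ys) ` X i)"
      by (subst prefix) blast
  qed
  have finite_X: "finite (X i)" for i
    by (rule finite_subset[OF _ finite_lists_length_eq[OF \<open>finite I\<close>, of "t + 1 - i"]]) (auto simp: X_def)
  have "card (X i) \<le> (d - 1) ^ (t + 1 - i)" if "i \<in> J" for i
  proof -
    have "\<forall>a\<in>I. card {b\<in>I. R a b} \<le> d - 1"
      using card_Smat_successors_le[OF assms(1,2)] by (simp add: R_def I_def)
    moreover have "x ! (i - 1) \<in> I"
      using that x by (auto simp: J_def walks_def I_def)
    ultimately show ?thesis
      unfolding X_def by (rule card_successively_Cons_le[OF \<open>finite I\<close>])
  qed
  then have card_ext: "card ((\<lambda>ys. take i x @ ys) ` X i) \<le> (d - 1) ^ (t + 1 - i)" if "i \<in> J" for i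
    using card_image_le[OF finite_X] that le_trans by blast
  have "finite J"
    by (simp add: J_def)
  have "card {y\<in>walks I t p q. y \<noteq> x \<and> walk_weight (Smat \<sigma>) y \<noteq> 0} \<le> card (\<Union>i\<in>J. (\<lambda>ys. take i x @ ys) ` X i)"
    using partners finite_X \<open>finite J\<close> by (intro card_mono) auto
  also have "\<dots> \<le> (\<Sum>i\<in>J. card ((\<lambda>ys. take i x @ ys) ` X i))"
    by (rule card_UN_le[OF \<open>finite J\<close>])
  also have "\<dots> \<le> (\<Sum>i\<in>J. (d - 1) ^ (t + 1 - i))"
    by (rule sum_mono[OF card_ext])
  finally have "real (card {y\<in>walks I t p q. y \<noteq> x \<and> walk_weight (Smat \<sigma>) y \<noteq> 0})
      \<le> real (\<Sum>i\<in>J. (d - 1) ^ (t + 1 - i))"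
    by (rule of_nat_mono)
  also have "\<dots> = (\<Sum>i\<in>J. real (d - 1) ^ (t + 1 - i))"
    by simp
  also have "\<dots> = (\<Sum>i\<in>{1..t}. if x ! i \<in> short_cycle_dbonds E (2 * T) then real (d - 1) ^ (t + 1 - i) else 0)"
    unfolding J_def by (rule sum.inter_filter) simp
  finally show ?thesis
    by (simp add: I_def)
qed

lemma sum_offdiag_le_card_support:
  fixes a :: "'w \<Rightarrow> real"
  assumes "finite W"
  shows "(\<Sum>x\<in>W. \<Sum>y\<in>W. if x \<noteq> y then a x * a y else 0)
       \<le> (\<Sum>x\<in>W. (a x)\<^sup>2 * real (card {y\<in>W. y \<noteq> x \<and> a y \<noteq> 0}))"
proof -
  define h where "h x y = (if y \<noteq> x \<and> a y \<noteq> 0 then (a x)\<^sup>2 / 2 else 0)" for x y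
  have "(if x \<noteq> y then a x * a y else 0) \<le> h x y + h y x" for x y
    using sum_squares_ge_zero[of "a x - a y" 0] by (auto simp: h_def power2_diff field_simps power2_eq_square)
  then have "(\<Sum>x\<in>W. \<Sum>y\<in>W. if x \<noteq> y then a x * a y else 0)
      \<le> (\<Sum>x\<in>W. \<Sum>y\<in>W. h x y) + (\<Sum>x\<in>W. \<Sum>y\<in>W. h y x)"
    by (simp add: sum.distrib[symmetric] sum_mono)
  also have "(\<Sum>x\<in>W. \<Sum>y\<in>W. h y x) = (\<Sum>x\<in>W. \<Sum>y\<in>W. h x y)"
    by (rule sum.swap)
  also have "(\<Sum>x\<in>W. \<Sum>y\<in>W. h x y) + (\<Sum>x\<in>W. \<Sum>y\<in>W. h x y)
      = (\<Sum>x\<in>W. (a x)\<^sup>2 * real (card {y\<in>W. y \<noteq> x \<and> a y \<noteq> 0}))"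
    using assms by (simp add: h_def sum.inter_filter[symmetric] sum.distrib[symmetric])
  finally show ?thesis .
qed

lemma sum_offdiag_walks_le:
  assumes "regular_graph Vs E d" and "no_backscattering Vs E \<sigma>" and "t \<le> T"
  shows "(\<Sum>x\<in>walks (dbonds E) t p q. \<Sum>y\<in>walks (dbonds E) t p q.
            if x \<noteq> y then cmod (walk_weight (Smat \<sigma>) x) * cmod (walk_weight (Smat \<sigma>) y) else 0)
       \<le> (\<Sum>x\<in>walks (dbonds E) t p q. (cmod (walk_weight (Smat \<sigma>) x))\<^sup>2 *
            (\<Sum>i\<in>{1..t}. if x ! i \<in> short_cycle_dbonds E (2 * T) then real (d - 1) ^ (t + 1 - i) else 0))"
proof -
  have "finite (dbonds E)"
    using assms(1) finite_dbonds by (auto simp: regular_graph_def)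
  have "(cmod (walk_weight (Smat \<sigma>) x))\<^sup>2 *
        real (card {y\<in>walks (dbonds E) t p q. y \<noteq> x \<and> cmod (walk_weight (Smat \<sigma>) y) \<noteq> 0})
      \<le> (cmod (walk_weight (Smat \<sigma>) x))\<^sup>2 *
        (\<Sum>i\<in>{1..t}. if x ! i \<in> short_cycle_dbonds E (2 * T) then real (d - 1) ^ (t + 1 - i) else 0)"
    if "x \<in> walks (dbonds E) t p q" for x
    using card_partner_walks_le[OF assms, of x p q] that
    by (cases "walk_weight (Smat \<sigma>) x = 0") (simp_all add: mult_left_mono)
  then show ?thesis
    by (intro sum_offdiag_le_card_support[THEN order_trans] sum_mono finite_walks \<open>finite (dbonds E)\<close>)
qed

lemma sum_offdiag_walk_weights_le:
  assumes "regular_graph Vs E d" and "vertex_matrices_ok Vs E \<sigma>" and "no_backscattering Vs E \<sigma>"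
    and "t \<le> T"
  shows "(\<Sum>p\<in>dbonds E. \<Sum>q\<in>dbonds E. \<Sum>x\<in>walks (dbonds E) t p q. \<Sum>y\<in>walks (dbonds E) t p q.
            if x \<noteq> y then cmod (walk_weight (Smat \<sigma>) x) * cmod (walk_weight (Smat \<sigma>) y) else 0)
       \<le> real (card (short_cycle_dbonds E (2 * T))) * (\<Sum>i\<in>{1..t}. real (d - 1) ^ (t + 1 - i))"
proof -
  define I where "I = dbonds E"
  define C where "C = short_cycle_dbonds E (2 * T)"
  define a where "a x = cmod (walk_weight (Smat \<sigma>) x)" for x
  define g where "g x = (\<Sum>i\<in>{1..t}. if x ! i \<in> C then real (d - 1) ^ (t + 1 - i) else 0)" for x
  have graph: "simple_graph Vs E"
    using assms(1) by (simp add: regular_graph_def)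
  have "finite I"
    using finite_dbonds[OF graph] by (simp add: I_def)
  have pairwise: "(\<Sum>x\<in>walks I t p q. \<Sum>y\<in>walks I t p q. if x \<noteq> y then a x * a y else 0)
      \<le> (\<Sum>x\<in>walks I t p q. (a x)\<^sup>2 * g x)" for p q
    unfolding a_def g_def C_def I_def by (rule sum_offdiag_walks_le[OF assms(1,3,4)])
  have "(\<Sum>p\<in>I. \<Sum>q\<in>I. \<Sum>x\<in>walks I t p q. \<Sum>y\<in>walks I t p q. if x \<noteq> y then a x * a y else 0)
      \<le> (\<Sum>p\<in>I. \<Sum>q\<in>I. \<Sum>x\<in>walks I t p q. (a x)\<^sup>2 * g x)"
    by (rule sum_mono, rule sum_mono, rule pairwise)
  also have "\<dots> = (\<Sum>p\<in>I. \<Sum>q\<in>I. \<Sum>i\<in>{1..t}. \<Sum>x\<in>walks I t p q.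
      real (d - 1) ^ (t + 1 - i) * (if x ! i \<in> C then (a x)\<^sup>2 else 0))"
    unfolding g_def by (intro sum.cong refl) (subst sum.swap, auto simp: sum_distrib_left intro!: sum.cong)
  also have "\<dots> = (\<Sum>i\<in>{1..t}. real (d - 1) ^ (t + 1 - i) *
      (\<Sum>p\<in>I. \<Sum>q\<in>I. \<Sum>x\<in>walks I t p q. if x ! i \<in> C then (a x)\<^sup>2 else 0))"
    by (subst sum_outer_to_inner[symmetric]) (simp add: sum_distrib_left)
  also have "\<dots> = (\<Sum>i\<in>{1..t}. real (d - 1) ^ (t + 1 - i) * real (card C))"
  proof (intro sum.cong refl arg_cong[where f = "\<lambda>x. _ * x"])
    fix i assume "i \<in> {1..t}"
    have "C \<subseteq> I"
      by (auto simp: C_def I_def short_cycle_dbonds_def)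
    then show "(\<Sum>p\<in>I. \<Sum>q\<in>I. \<Sum>x\<in>walks I t p q. if x ! i \<in> C then (a x)\<^sup>2 else 0) = real (card C)"
      unfolding a_def walk_weight_norm_sq[symmetric] using \<open>i \<in> {1..t}\<close> orthonormal_rows_Smat[OF graph assms(2)] orthonormal_cols_Smat[OF graph assms(2)]
      by (intro sum_walks_through_set[OF \<open>finite I\<close>])
        (auto simp: I_def orthonormal_rows_sum_norm_sq orthonormal_cols_sum_norm_sq)
  qed
  finally show ?thesis
    unfolding a_def C_def I_def by (simp add: sum_distrib_left mult.commute)
qed

lemma sum_power_le_twice:
  fixes r :: real
  assumes "r \<ge> 2"
  shows "(\<Sum>i\<in>{1..t}. r ^ (t + 1 - i)) \<le> 2 * r ^ t"
proof -
  have "(\<Sum>i\<in>{1..t}. r ^ (t + 1 - i)) \<le> 2 * r ^ t - 2"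
  proof (induction t)
    case (Suc t)
    have "(\<Sum>i\<in>{1..Suc t}. r ^ (Suc t + 1 - i)) = r * (\<Sum>i\<in>{1..t}. r ^ (t + 1 - i)) + r"
      by (simp add: sum_distrib_left Suc_diff_le)
    also have "\<dots> \<le> r * (2 * r ^ t - 2) + r"
      using Suc.IH assms by simp
    also have "\<dots> \<le> 2 * r ^ Suc t - 2"
      using assms by (simp add: algebra_simps)
    finally show ?case .
  qed simp
  then show ?thesis by simp
qed

lemma quad_form_mean_transition_Smat_le:
  assumes "regular_graph Vs E d" and "d \<ge> 3" and "vertex_matrices_ok Vs E \<sigma>"
    and "no_backscattering Vs E \<sigma>" and "\<forall>b\<in>dbonds E. cmod (f b) \<le> \<kappa>" and "t \<le> T"
  shows "quad_form (dbonds E) f (mean_transition (dbonds E) L (Smat \<sigma>) t)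
       \<le> quad_form (dbonds E) f (mpow (dbonds E) (Mmat \<sigma>) t)
         + 4 * \<kappa>\<^sup>2 * (real d - 1) ^ t * real (card (cycle_bonds E (2 * T)))"
proof -
  have graph: "simple_graph Vs E"
    using assms(1) by (simp add: regular_graph_def)
  have "real (card (short_cycle_dbonds E (2 * T))) \<le> 2 * real (card (cycle_bonds E (2 * T)))"
    using of_nat_mono[OF card_short_cycle_dbonds_le[OF graph, of "2 * T"]] by simp
  moreover have "(\<Sum>i\<in>{1..t}. real (d - 1) ^ (t + 1 - i)) \<le> 2 * (real d - 1) ^ t"
    using sum_power_le_twice[of "real (d - 1)" t] assms(2) by (simp add: of_nat_diff)
  ultimately have "real (card (short_cycle_dbonds E (2 * T))) * (\<Sum>i\<in>{1..t}. real (d - 1) ^ (t + 1 - i))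
      \<le> (2 * real (card (cycle_bonds E (2 * T)))) * (2 * (real d - 1) ^ t)"
    by (intro mult_mono) (auto intro: sum_nonneg)
  then have "\<kappa>\<^sup>2 * (real (card (short_cycle_dbonds E (2 * T))) * (\<Sum>i\<in>{1..t}. real (d - 1) ^ (t + 1 - i)))
      \<le> \<kappa>\<^sup>2 * ((2 * real (card (cycle_bonds E (2 * T)))) * (2 * (real d - 1) ^ t))"
    by (rule mult_left_mono) simp
  also have "\<dots> = 4 * \<kappa>\<^sup>2 * (real d - 1) ^ t * real (card (cycle_bonds E (2 * T)))"
    by (simp add: algebra_simps)
  finally have "\<kappa>\<^sup>2 * (real (card (short_cycle_dbonds E (2 * T))) * (\<Sum>i\<in>{1..t}. real (d - 1) ^ (t + 1 - i)))
      \<le> 4 * \<kappa>\<^sup>2 * (real d - 1) ^ t * real (card (cycle_bonds E (2 * T)))" .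
  moreover have "mpow (dbonds E) (Mmat \<sigma>) t = mat_pow (dbonds E) (\<lambda>b c. (cmod (Smat \<sigma> b c))\<^sup>2) t"
    by (simp add: mpow_eq_mat_pow Mmat_def[abs_def])
  ultimately show ?thesis
    using quad_form_mean_transition_le[OF finite_dbonds[OF graph] assms(5), of L "Smat \<sigma>" t]
      mult_left_mono[OF sum_offdiag_walk_weights_le[OF assms(1,3,4,6)], of "\<kappa>\<^sup>2"]
    by simp
qed

lemma sum_lags:
  fixes G :: "nat \<Rightarrow> real"
  shows "(\<Sum>s<T. \<Sum>s'<T. G (s - s' + (s' - s))) = real T * G 0 + 2 * (\<Sum>t=1..T. real (T - t) * G t)"
proof (induction T)
  case (Suc T)
  have "(\<Sum>s<T. G (T - s)) = (\<Sum>t=1..T. G t)"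
  proof -
    have "(\<Sum>s<T. G (T - s)) = (\<Sum>s<T. G (Suc (T - Suc s)))"
      by (intro sum.cong refl) (simp add: Suc_diff_Suc)
    also have "\<dots> = (\<Sum>s<T. G (Suc s))"
      by (rule sum.nat_diff_reindex)
    finally show ?thesis
      by (simp add: sum.atLeast1_atMost_eq)
  qed
  moreover have "(\<Sum>t=1..Suc T. real (Suc T - t) * G t) = (\<Sum>t=1..T. real (T - t) * G t) + (\<Sum>t=1..T. G t)"
    by (simp add: sum.distrib[symmetric] Suc_diff_le of_nat_Suc algebra_simps)
  ultimately show ?case
    using Suc.IH by (simp add: sum.distrib algebra_simps)
qed simp

lemma w_hat_eq: "1 \<le> t \<Longrightarrow> t \<le> T \<Longrightarrow> w_hat T (int t) = real (T - t) / (real T)\<^sup>2"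
  by (auto simp: w_hat_def field_simps power2_eq_square of_nat_diff)

lemma lag_average_le_window:
  fixes G H :: "nat \<Rightarrow> real"
  assumes "T > 0" and "\<And>t. 1 \<le> t \<Longrightarrow> t \<le> T \<Longrightarrow> G t \<le> H t"
  shows "(\<Sum>s<T. \<Sum>s'<T. G (s - s' + (s' - s))) / (real T)\<^sup>2
       \<le> G 0 / real T + 2 * (\<Sum>t=1..T. w_hat T (int t) * H t)"
proof -
  have "(\<Sum>t=1..T. real (T - t) * G t) / (real T)\<^sup>2 = (\<Sum>t=1..T. w_hat T (int t) * G t)"
    unfolding sum_divide_distrib by (intro sum.cong refl) (simp add: w_hat_eq)
  also have "\<dots> \<le> (\<Sum>t=1..T. w_hat T (int t) * H t)"
    using assms(2) by (intro sum_mono mult_left_mono) (simp_all add: w_hat_eq)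
  finally show ?thesis
    using assms(1) by (simp add: sum_lags add_divide_distrib power2_eq_square)
qed

lemma variance_bound:
  fixes T :: nat and \<kappa> :: real and f :: "nat \<times> nat \<Rightarrow> complex"
  assumes "d \<ge> 3" and graph: "regular_graph Vs E d" and "vertex_matrices_ok Vs E \<sigma>"
    and "no_backscattering Vs E \<sigma>" and "T > 0"
    and bounded: "\<forall>b\<in>dbonds E. cmod (f b) \<le> \<kappa>" and traceless: "Tr_Op (dbonds E) f = 0"
    and eigenbasis: "\<forall>k. orthonormal_eigenbasis (dbonds E) (2 * nbonds E) (Umat \<sigma> Lu k) (\<phi> k)"
    and integrable: "\<forall>K\<ge>0. var_integrand (dbonds E) (2 * nbonds E) f \<phi> integrable_on {0..K}"
    and limit: "((\<lambda>K. (1 / K) * integral {0..K} (var_integrand (dbonds E) (2 * nbonds E) f \<phi>)) \<longlongrightarrow> Vlim) at_top"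
  shows "Vlim / (2 * real (nbonds E))
         \<le> (1 / (2 * real (nbonds E) * real T)) * (\<Sum>b\<in>dbonds E. (cmod (f b))\<^sup>2)
           + (1 / real (nbonds E)) *
             (\<Sum>t=1..T. w_hat T (int t) *
                (Re (cinner (dbonds E) f
                       (\<lambda>b. \<Sum>c\<in>dbonds E. complex_of_real (mpow (dbonds E) (Mmat \<sigma>) t b c) * f c))
                 + 4 * \<kappa>\<^sup>2 * (real d - 1) ^ t * real (card (cycle_bonds E (2 * T)))))"
proof -
  define I where "I = dbonds E"
  define L where "L = (\<lambda>b. Lu (ubond b))"
  define G where "G t = quad_form I f (mean_transition I L (Smat \<sigma>) t)" for t
  define H where "H t = quad_form I f (mpow I (Mmat \<sigma>) t)
      + 4 * \<kappa>\<^sup>2 * (real d - 1) ^ t * real (card (cycle_bonds E (2 * T)))" for t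
  have "simple_graph Vs E"
    using graph by (simp add: regular_graph_def)
  then have "finite I" and unitary: "orthonormal_rows I (Smat \<sigma>)" "orthonormal_cols I (Smat \<sigma>)"
    using finite_dbonds orthonormal_rows_Smat orthonormal_cols_Smat assms(3) by (auto simp: I_def)
  have "(running_mean (var_integrand I (2 * nbonds E) f \<phi>) \<longlongrightarrow> Vlim) at_top"
    using limit by (simp add: I_def running_mean_def[abs_def])
  then have "Vlim \<le> (\<Sum>s<T. \<Sum>s'<T. G (s - s' + (s' - s))) / (real T)\<^sup>2"
    unfolding G_def
    using time_average_variance_le[OF \<open>finite I\<close> unitary \<open>T > 0\<close> _ traceless[folded I_def]] eigenbasis
      integrable
    by (simp add: I_def L_def Umat_eq_phase_mat)
  also have "\<dots> \<le> G 0 / real T + 2 * (\<Sum>t=1..T. w_hat T (int t) * H t)"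
    using quad_form_mean_transition_Smat_le[OF graph assms(1,3,4) bounded]
    by (intro lag_average_le_window \<open>T > 0\<close>) (simp add: G_def H_def I_def)
  finally have "Vlim / (2 * real (nbonds E)) \<le> (G 0 / real T + 2 * (\<Sum>t=1..T. w_hat T (int t) * H t)) / (2 * real (nbonds E))"
    by (simp add: divide_right_mono)
  then show ?thesis
    using quad_form_mean_transition_0[OF \<open>finite I\<close>]
    by (simp add: G_def H_def I_def quad_form_def add_divide_distrib field_simps)
qed

theorem proposition4:
  "\<forall>d::nat. d \<ge> 3 \<longrightarrow> (\<exists>c::real.
     \<forall>(Vs::nat set) (E::nat \<Rightarrow> nat \<Rightarrow> bool) (\<sigma>::nat \<Rightarrow> nat \<Rightarrow> nat \<Rightarrow> complex)
       (Lu::nat set \<Rightarrow> real) (T::nat) (\<kappa>::real) (f::nat \<times> nat \<Rightarrow> complex)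
       (\<phi>::real \<Rightarrow> nat \<Rightarrow> nat \<times> nat \<Rightarrow> complex) (Vlim::real).
       regular_graph Vs E d \<longrightarrow>
       vertex_matrices_ok Vs E \<sigma> \<longrightarrow>
       no_backscattering Vs E \<sigma> \<longrightarrow>
       (\<forall>e\<in>ubonds E. Lu e > 0) \<longrightarrow>
       rationally_independent (ubonds E) Lu \<longrightarrow>
       T > 0 \<longrightarrow> \<kappa> > 0 \<longrightarrow>
       (\<forall>b\<in>dbonds E. cmod (f b) \<le> \<kappa>) \<longrightarrow>
       Tr_Op (dbonds E) f = 0 \<longrightarrow>
       (\<forall>k. orthonormal_eigenbasis (dbonds E) (2 * nbonds E) (Umat \<sigma> Lu k) (\<phi> k)) \<longrightarrow>
       (\<forall>K\<ge>0. var_integrand (dbonds E) (2 * nbonds E) f \<phi> integrable_on {0..K}) \<longrightarrow>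
       ((\<lambda>K. (1 / K) * integral {0..K} (var_integrand (dbonds E) (2 * nbonds E) f \<phi>))
          \<longlongrightarrow> Vlim) at_top \<longrightarrow>
       Vlim / (2 * real (nbonds E))
         \<le> (1 / (2 * real (nbonds E) * real T)) * (\<Sum>b\<in>dbonds E. (cmod (f b))\<^sup>2)
           + (1 / real (nbonds E)) *
             (\<Sum>t=1..T. w_hat T (int t) *
                (Re (cinner (dbonds E) f
                       (\<lambda>b. \<Sum>c\<in>dbonds E. complex_of_real (mpow (dbonds E) (Mmat \<sigma>) t b c) * f c))
                 + c * \<kappa>\<^sup>2 * (real d - 1) ^ t * real (card (cycle_bonds E (2 * T))))))"
  by (intro allI impI exI[of _ 4]) (rule variance_bound; assumption)

end
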